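(* Assume that $\Omega$ is uniformly $c$-convex with respect to $\Omega^*$ and $\Omega^*$ is uniformly $c^*$-convex with respect to $\Omega$. Then there exist $C^2$ functions $h$ on $\Omega$ and $h^*$ on $\Omega^*$, and constants $\epsilon,\epsilon^*,\delta_0,\delta_0^*>0$, such that: (1) $\nabla h=\nu$ on $\partial\Omega$; (2) $h<0$ on $\Gamma_\epsilon$; (3) $[D_{ij}h(x)-c^{l,k}c_{ij,l}(x,y)D_kh(x)]\xi_i\xi_j\ge\delta_0|\xi|^2$ for all $x\in\Gamma_\epsilon$, $y\in\Omega^*$, $\xi\in\mathbb R^n$; (4) $\nabla h^*=\nu^*$ on $\partial\Omega^*$; (5) $h^*<0$ on $\Gamma^*_{\epsilon^*}$; (6) $[D_{ij}h^*(y)-c^{k,l}c_{l,ij}(x,y)D_kh^*(y)]\xi_i\xi_j\ge\delta_0^*|\xi|^2$ for all $y\in\Gamma^*_{\epsilon^*}$, $x\in\Omega$, $\xi\in\mathbb R^n$.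
   Context: $\Omega,\Omega^*\subset\mathbb R^n$ are open, bounded domains with smooth boundary, with outer unit normals $\nu,\nu^*$. The cost $c\in C^{4+\alpha}(\overline\Omega\times\overline{\Omega^*})$ satisfies: for each $x$ the map $y\mapsto\nabla_xc(x,y)$ is injective and for each $y$ the map $x\mapsto\nabla_yc(x,y)$ is injective; $\det D^2_{xy}c\ne0$ on $\overline\Omega\times\overline{\Omega^*}$. Notation: $c_{ij\ldots,kl\ldots}=\partial_{x_i}\partial_{x_j}\cdots\partial_{y_k}\partial_{y_l}\cdots c$, $c^{i,j}$ are the entries of the inverse of the matrix $(c_{i,j})$; summation convention. $\Omega$ is uniformly $c$-convex w.r.t. $\Omega^*$ if $\nabla_yc(\Omega,y)$ is convex for each $y\in\Omega^*$ and $[D_i\nu_j(x)-c^{l,k}c_{ij,l}(x,y)\nu_k(x)]\tau_i\tau_j\ge\delta_1$ for some $\delta_1>0$, all $x\in\partial\Omega$, $y\in\Omega^*$ and unit tangent vectors $\tau$ to $\partial\Omega$ at $x$. $\Omega^*$ is uniformly $c^*$-convex w.r.t. $\Omega$ if $\nabla_xc(x,\Omega^* )$ is convex for each $x\in\Omega$ and $[D_i\nu^*_j(y)-c^{k,l}c_{l,ij}(x,y)\nu^*_k(y)]\tau^*_i\tau^*_j\ge\delta_1^*>0$ for all $y\in\partial\Omega^*$, $x\in\Omega$, unit tangent $\tau^*$. $\Gamma_\epsilon=\{x\in\Omega:\operatorname{dist}(x,\partial\Omega)<\epsilon\}$ and $\Gamma^*_{\epsilon^*}=\{y\in\Omega^*:\operatorname{dist}(y,\partial\Omega^*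 )<\epsilon^*\}$. *)

theory Defs
  imports "HOL-Analysis.Analysis"
begin

definition dderiv :: "('a::real_normed_vector \<Rightarrow> real) \<Rightarrow> 'a \<Rightarrow> 'a \<Rightarrow> real" where
  "dderiv f v = (\<lambda>z. frechet_derivative f (at z) v)"

fun Ck :: "nat \<Rightarrow> 'a::euclidean_space set \<Rightarrow> ('a \<Rightarrow> real) \<Rightarrow> bool" where
  "Ck 0 U f = continuous_on U f"
| "Ck (Suc k) U f = (continuous_on U f \<and> f differentiable_on U \<and>
      (\<forall>b\<in>Basis. Ck k U (dderiv f b)))"

definition smooth_on :: "'a::euclidean_space set \<Rightarrow> ('a \<Rightarrow> real) \<Rightarrow> bool" where
  "smooth_on U f = (\<forall>k. Ck k U f)"

fun pdl :: "'a::real_normed_vector list \<Rightarrow> ('a \<Rightarrow> real) \<Rightarrow> 'a \<Rightarrow> real" where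
  "pdl [] f = f"
| "pdl (b # bs) f = dderiv (pdl bs f) b"

definition holder_on :: "real \<Rightarrow> 'a::metric_space set \<Rightarrow> ('a \<Rightarrow> real) \<Rightarrow> bool" where
  "holder_on \<alpha> S g = (\<exists>K. \<forall>z\<in>S. \<forall>w\<in>S. \<bar>g z - g w\<bar> \<le> K * dist z w powr \<alpha>)"

definition Ck_alpha :: "nat \<Rightarrow> real \<Rightarrow> 'a::euclidean_space set \<Rightarrow> ('a \<Rightarrow> real) \<Rightarrow> bool" where
  "Ck_alpha k \<alpha> S f = (\<exists>U. open U \<and> S \<subseteq> U \<and> Ck k U f \<and>
      (\<forall>bs. length bs = k \<and> set bs \<subseteq> Basis \<longrightarrow> holder_on \<alpha> S (pdl bs f)))"

definition grad :: "(real^'n \<Rightarrow> real) \<Rightarrow> real^'n \<Rightarrow> real^'n" where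
  "grad f x = (\<chi> i. dderiv f (axis i 1) x)"

definition D2 :: "(real^'n \<Rightarrow> real) \<Rightarrow> 'n \<Rightarrow> 'n \<Rightarrow> real^'n \<Rightarrow> real" where
  "D2 f i j = dderiv (dderiv f (axis j 1)) (axis i 1)"

definition cX :: "'n \<Rightarrow> ((real^'n) \<times> (real^'n) \<Rightarrow> real) \<Rightarrow> (real^'n) \<times> (real^'n) \<Rightarrow> real" where
  "cX i c = dderiv c (axis i 1, 0)"

definition cY :: "'n \<Rightarrow> ((real^'n) \<times> (real^'n) \<Rightarrow> real) \<Rightarrow> (real^'n) \<times> (real^'n) \<Rightarrow> real" where
  "cY k c = dderiv c (0, axis k 1)"

definition gradX :: "((real^'n) \<times> (real^'n) \<Rightarrow> real) \<Rightarrow> real^'n \<Rightarrow> real^'n \<Rightarrow> real^'n" where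
  "gradX c x y = (\<chi> i. cX i c (x, y))"

definition gradY :: "((real^'n) \<times> (real^'n) \<Rightarrow> real) \<Rightarrow> real^'n \<Rightarrow> real^'n \<Rightarrow> real^'n" where
  "gradY c x y = (\<chi> k. cY k c (x, y))"

definition cmix :: "((real^'n) \<times> (real^'n) \<Rightarrow> real) \<Rightarrow> real^'n \<Rightarrow> real^'n \<Rightarrow> real^'n^'n" where
  "cmix c x y = (\<chi> i j. cY j (cX i c) (x, y))"

definition cinv :: "((real^'n) \<times> (real^'n) \<Rightarrow> real) \<Rightarrow> real^'n \<Rightarrow> real^'n \<Rightarrow> 'n \<Rightarrow> 'n \<Rightarrow> real" where
  "cinv c x y i j = matrix_inv (cmix c x y) $ i $ j"

definition cXXY :: "((real^'n) \<times> (real^'n) \<Rightarrow> real) \<Rightarrow> 'n \<Rightarrow> 'n \<Rightarrow> 'n \<Rightarrow> real^'n \<Rightarrow> real^'n \<Rightarrow> real" where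
  "cXXY c i j l x y = cX i (cX j (cY l c)) (x, y)"

definition cXYY :: "((real^'n) \<times> (real^'n) \<Rightarrow> real) \<Rightarrow> 'n \<Rightarrow> 'n \<Rightarrow> 'n \<Rightarrow> real^'n \<Rightarrow> real^'n \<Rightarrow> real" where
  "cXYY c l i j x y = cX l (cY i (cY j c)) (x, y)"

text \<open>Open bounded domain (connected) with smooth boundary, and nu is its outer unit normal:
  there is a smooth defining function rho near the boundary with nonvanishing gradient,
  Omega = {rho < 0} near the boundary, and nu = grad rho / |grad rho| there
  (thus nu is a smooth extension of the outer unit normal to a neighbourhood of the boundary).\<close>
definition smooth_domain_normal :: "(real^'n) set \<Rightarrow> (real^'n \<Rightarrow> real^'n) \<Rightarrow> bool" where
  "smooth_domain_normal \<Omega> \<nu> = (open \<Omega> \<and> bounded \<Omega> \<and> connected \<Omega> \<and> \<Omega> \<noteq> {} \<and>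
     (\<exists>\<rho> U. open U \<and> frontier \<Omega> \<subseteq> U \<and> smooth_on U \<rho> \<and>
        (\<forall>x\<in>U. x \<in> \<Omega> \<longleftrightarrow> \<rho> x < 0) \<and>
        (\<forall>x\<in>U. grad \<rho> x \<noteq> 0 \<and> \<nu> x = (1 / norm (grad \<rho> x)) *\<^sub>R grad \<rho> x)))"

definition Dvec :: "(real^'n \<Rightarrow> real^'n) \<Rightarrow> 'n \<Rightarrow> 'n \<Rightarrow> real^'n \<Rightarrow> real" where
  "Dvec \<nu> i j = dderiv (\<lambda>z. \<nu> z $ j) (axis i 1)"

definition unif_c_convex ::
  "((real^'n) \<times> (real^'n) \<Rightarrow> real) \<Rightarrow> (real^'n) set \<Rightarrow> (real^'n \<Rightarrow> real^'n) \<Rightarrow> (real^'n) set \<Rightarrow> bool" where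
  "unif_c_convex c \<Omega> \<nu> \<Omega>s = ((\<forall>y\<in>\<Omega>s. convex ((\<lambda>x. gradY c x y) ` \<Omega>)) \<and>
     (\<exists>\<delta>1>0. \<forall>x\<in>frontier \<Omega>. \<forall>y\<in>\<Omega>s. \<forall>\<tau>. norm \<tau> = 1 \<and> \<tau> \<bullet> \<nu> x = 0 \<longrightarrow>
        (\<Sum>i\<in>UNIV. \<Sum>j\<in>UNIV. (Dvec \<nu> i j x
            - (\<Sum>l\<in>UNIV. \<Sum>k\<in>UNIV. cinv c x y l k * cXXY c i j l x y * (\<nu> x $ k)))
          * \<tau> $ i * \<tau> $ j) \<ge> \<delta>1))"

definition unif_cstar_convex ::
  "((real^'n) \<times> (real^'n) \<Rightarrow> real) \<Rightarrow> (real^'n) set \<Rightarrow> (real^'n \<Rightarrow> real^'n) \<Rightarrow> (real^'n) set \<Rightarrow> bool" where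
  "unif_cstar_convex c \<Omega>s \<nu>s \<Omega> = ((\<forall>x\<in>\<Omega>. convex ((\<lambda>y. gradX c x y) ` \<Omega>s)) \<and>
     (\<exists>\<delta>1s>0. \<forall>y\<in>frontier \<Omega>s. \<forall>x\<in>\<Omega>. \<forall>\<tau>. norm \<tau> = 1 \<and> \<tau> \<bullet> \<nu>s y = 0 \<longrightarrow>
        (\<Sum>i\<in>UNIV. \<Sum>j\<in>UNIV. (Dvec \<nu>s i j y
            - (\<Sum>k\<in>UNIV. \<Sum>l\<in>UNIV. cinv c x y k l * cXYY c l i j x y * (\<nu>s y $ k)))
          * \<tau> $ i * \<tau> $ j) \<ge> \<delta>1s))"

definition strip :: "(real^'n) set \<Rightarrow> real \<Rightarrow> (real^'n) set" where
  "strip \<Omega> \<epsilon> = {x\<in>\<Omega>. infdist x (frontier \<Omega>) < \<epsilon>}"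

end

theory Submission
  imports Defs
begin

text \<open>Normalise a defining function \<open>\<rho>\<close> of \<open>\<Omega>\<close> to \<open>d = \<rho> / \<bar>\<nabla>\<rho>\<bar>\<close>, so that
  \<open>\<nabla>d = \<nu>\<close> on \<open>\<partial>\<Omega>\<close> and, on tangent vectors, \<open>D\<^sup>2d\<close> agrees with \<open>D\<nu>\<close>. Put
  \<open>h = \<phi>(d)\<close> for a \<open>C\<^sup>2\<close> profile with \<open>\<phi>(0) = 0\<close>, \<open>\<phi>'(0) = 1\<close>, \<open>\<phi>''(0) = 2K\<close>, negative
  for \<open>t < 0\<close> and constant for \<open>t \<le> -1/K\<close> (so that \<open>h\<close> extends to all of \<open>\<Omega>\<close>). On
  \<open>\<partial>\<Omega>\<close> one gets \<open>\<nabla>h = \<nu>\<close> and \<open>D\<^sup>2h = D\<^sup>2d + 2K \<nu> \<otimes> \<nu>\<close>, so the form in (3) equals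
  the uniform \<open>c\<close>-convexity form on tangent vectors, hence is \<open>\<ge> \<delta>\<^sub>1\<close> there, while the
  term \<open>2K(\<nu> \<bullet> \<xi>)\<^sup>2\<close> dominates the remaining cross terms once \<open>K\<close> is large. Uniform
  continuity then carries positivity from \<open>\<partial>\<Omega>\<close> to a strip \<open>\<Gamma>\<^sub>\<epsilon>\<close>. The same
  construction for \<open>\<Omega>\<^sup>*\<close>, with the roles of \<open>x\<close> and \<open>y\<close> exchanged, gives \<open>h\<^sup>*\<close>.\<close>

section \<open>Partial derivatives and the classes \<open>C\<^sup>k\<close>\<close>

lemma dderiv_eq_derivative: "(f has_derivative f') (at x) \<Longrightarrow> dderiv f v x = f' v"
  unfolding dderiv_def using frechet_derivative_at by metis

lemma dderiv_cong_open:
  assumes "open U" "x \<in> U" "\<And>z. z \<in> U \<Longrightarrow> f z = g z"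
  shows "dderiv f v x = dderiv g v x"
proof -
  have "(f has_derivative f') (at x) \<longleftrightarrow> (g has_derivative f') (at x)" for f'
    using has_derivative_transform_within_open assms by metis
  then show ?thesis unfolding dderiv_def frechet_derivative_def by simp
qed

lemma differentiable_at_cong_open:
  assumes "open U" "x \<in> U" "\<And>z. z \<in> U \<Longrightarrow> f z = g z" "f differentiable (at x)"
  shows "g differentiable (at x)"
  using assms has_derivative_transform_within_open unfolding differentiable_def by metis

lemma differentiable_on_cong_open:
  assumes "open U" "\<And>z. z \<in> U \<Longrightarrow> f z = g z" "f differentiable_on U"
  shows "g differentiable_on U"
  using assms unfolding differentiable_on_eq_differentiable_at[OF assms(1)] differentiable_def
  using has_derivative_transform_within_open by metis

lemma dderiv_add_at:
  "f differentiable (at x) \<Longrightarrow> g differentiable (at x) \<Longrightarrow>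
   dderiv (\<lambda>x. f x + g x) v x = dderiv f v x + dderiv g v x"
  by (rule dderiv_eq_derivative[OF has_derivative_add, unfolded dderiv_def[symmetric]])
     (auto simp: frechet_derivative_works dderiv_def)

lemma dderiv_mult_at:
  "f differentiable (at x) \<Longrightarrow> g differentiable (at x) \<Longrightarrow>
   dderiv (\<lambda>x. f x * g x) v x = f x * dderiv g v x + dderiv f v x * g x"
  by (rule dderiv_eq_derivative[OF has_derivative_mult, unfolded dderiv_def[symmetric]])
     (auto simp: frechet_derivative_works dderiv_def)

lemma dderiv_compose_at:
  assumes "(\<phi> has_real_derivative d) (at (f x))" "f differentiable (at x)"
  shows "dderiv (\<lambda>x. \<phi> (f x)) v x = d * dderiv f v x"
proof -
  have "(\<phi> has_derivative (\<lambda>h. d * h)) (at (f x))"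
    using assms(1) by (simp add: has_field_derivative_def mult.commute[of _ d])
  from has_derivative_compose[OF frechet_derivative_works[THEN iffD1, OF assms(2)] this]
  show ?thesis using dderiv_eq_derivative by (fastforce simp: o_def dderiv_def)
qed

lemma Ck_imp_continuous_on: "Ck k U f \<Longrightarrow> continuous_on U f"
  by (cases k) auto

lemma Ck_Suc_imp_differentiable_at:
  "Ck (Suc k) U f \<Longrightarrow> open U \<Longrightarrow> x \<in> U \<Longrightarrow> f differentiable (at x)"
  by (auto simp: differentiable_on_eq_differentiable_at)

lemma Ck_Suc_dderiv: "Ck (Suc k) U f \<Longrightarrow> b \<in> Basis \<Longrightarrow> Ck k U (dderiv f b)"
  by simp

lemma Ck_Suc_imp_Ck: "Ck (Suc k) U f \<Longrightarrow> Ck k U f"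
  by (induction k arbitrary: f) auto

lemma Ck_cong_open:
  assumes "open U" "\<And>z. z \<in> U \<Longrightarrow> f z = g z" "Ck k U f"
  shows "Ck k U g"
  using assms(2,3)
proof (induction k arbitrary: f g)
  case 0
  then show ?case using continuous_on_cong by (metis Ck.simps(1))
next
  case (Suc k)
  have "Ck k U (dderiv g b)" if "b \<in> Basis" for b
    using Suc.IH[of "dderiv f b" "dderiv g b"] Suc.prems that dderiv_cong_open[OF assms(1) _ Suc.prems(1)]
    by auto
  moreover have "continuous_on U g" "g differentiable_on U"
    using Suc.prems continuous_on_cong differentiable_on_cong_open[OF assms(1)] by (metis Ck.simps(2))+
  ultimately show ?case by simp
qed

lemma Ck_subset_open: "open V \<Longrightarrow> V \<subseteq> U \<Longrightarrow> Ck k U f \<Longrightarrow> Ck k V f"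
  by (induction k arbitrary: f) (auto intro: continuous_on_subset differentiable_on_subset)

lemma Ck_Un_open: "open A \<Longrightarrow> open B \<Longrightarrow> Ck k A f \<Longrightarrow> Ck k B f \<Longrightarrow> Ck k (A \<union> B) f"
  by (induction k arbitrary: f)
     (auto simp: differentiable_on_eq_differentiable_at open_Un intro: continuous_on_open_Un)

lemma Ck_const: "Ck k U (\<lambda>_. c)"
proof -
  have d: "dderiv (\<lambda>_. c) v = (\<lambda>_. 0)" for v c
    using dderiv_eq_derivative[OF has_derivative_const] by (auto simp: fun_eq_iff)
  show ?thesis by (induction k arbitrary: c) (auto simp: d)
qed

lemma Ck_add:
  assumes "open U" "Ck k U f" "Ck k U g"
  shows "Ck k U (\<lambda>x. f x + g x)"
  using assms(2,3)
proof (induction k arbitrary: f g)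
  case 0
  then show ?case by (auto intro: continuous_on_add)
next
  case (Suc k)
  note diff = Ck_Suc_imp_differentiable_at[OF _ assms(1)]
  have d: "dderiv (\<lambda>x. f x + g x) b x = dderiv f b x + dderiv g b x" if "x \<in> U" for b x
    by (rule dderiv_add_at[OF diff[OF Suc.prems(1) that] diff[OF Suc.prems(2) that]])
  have "Ck k U (dderiv (\<lambda>x. f x + g x) b)" if "b \<in> Basis" for b
  proof (rule Ck_cong_open[OF assms(1)])
    show "Ck k U (\<lambda>x. dderiv f b x + dderiv g b x)"
      using Suc.prems that by (simp add: Suc.IH)
  qed (simp add: d)
  then show ?case
    using Suc.prems by (simp add: continuous_on_add differentiable_on_add)
qed

lemma Ck_mult:
  assumes "open U" "Ck k U f" "Ck k U g"
  shows "Ck k U (\<lambda>x. f x * g x)"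
  using assms(2,3)
proof (induction k arbitrary: f g)
  case 0
  then show ?case by (auto intro: continuous_on_mult)
next
  case (Suc k)
  note diff = Ck_Suc_imp_differentiable_at[OF _ assms(1)]
  have d: "dderiv (\<lambda>x. f x * g x) b x = f x * dderiv g b x + dderiv f b x * g x" if "x \<in> U" for b x
    by (rule dderiv_mult_at[OF diff[OF Suc.prems(1) that] diff[OF Suc.prems(2) that]])
  have "Ck k U (dderiv (\<lambda>x. f x * g x) b)" if "b \<in> Basis" for b
  proof (rule Ck_cong_open[OF assms(1)])
    show "Ck k U (\<lambda>x. f x * dderiv g b x + dderiv f b x * g x)"
      using Suc.prems that by (simp add: Ck_add[OF assms(1)] Suc.IH Ck_Suc_imp_Ck)
  qed (simp add: d)
  then show ?case
    using Suc.prems by (simp add: continuous_on_mult differentiable_on_mult)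
qed

lemma Ck_sum:
  assumes "open U" "finite I" "\<And>i. i \<in> I \<Longrightarrow> Ck k U (f i)"
  shows "Ck k U (\<lambda>x. \<Sum>i\<in>I. f i x)"
  using assms(2,3)
  by (induction I rule: finite_induct) (simp_all add: Ck_const Ck_add[OF assms(1)])

lemma Ck_compose_real:
  fixes D :: "nat \<Rightarrow> real \<Rightarrow> real"
  assumes "open U" "open S" "f ` U \<subseteq> S" "Ck k U f"
    and "\<And>j t. j < k \<Longrightarrow> t \<in> S \<Longrightarrow> (D j has_real_derivative D (Suc j) t) (at t)"
    and "continuous_on S (D k)"
  shows "Ck k U (\<lambda>x. D 0 (f x))"
  using assms(4-6)
proof (induction k arbitrary: D)
  case 0
  then show ?case using assms(3) by (auto intro: continuous_on_compose2)
next
  case (Suc k)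
  have f_diff: "f differentiable (at x)" if "x \<in> U" for x
    using Ck_Suc_imp_differentiable_at[OF Suc.prems(1) assms(1) that] .
  have D0: "(D 0 has_real_derivative D 1 (f x)) (at (f x))" if "x \<in> U" for x
    using Suc.prems(2)[of 0] assms(3) that by auto
  have d: "dderiv (\<lambda>x. D 0 (f x)) b x = D 1 (f x) * dderiv f b x" if "x \<in> U" for b x
    by (rule dderiv_compose_at[OF D0[OF that] f_diff[OF that]])
  have D1: "Ck k U (\<lambda>x. D 1 (f x))"
    using Suc.IH[of "\<lambda>j. D (Suc j)"] Suc.prems by (simp add: Ck_Suc_imp_Ck)
  have "Ck k U (dderiv (\<lambda>x. D 0 (f x)) b)" if "b \<in> Basis" for b
  proof (rule Ck_cong_open[OF assms(1)])
    show "Ck k U (\<lambda>x. D 1 (f x) * dderiv f b x)"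
      using D1 Suc.prems(1) that by (simp add: Ck_mult[OF assms(1)])
  qed (simp add: d)
  moreover have "(\<lambda>x. D 0 (f x)) differentiable_on U"
    using differentiable_chain_at[OF f_diff, of _ "D 0"] D0 assms(1)
    by (auto simp: o_def differentiable_on_eq_differentiable_at
        real_differentiable_def differentiable_def has_field_derivative_def)
  ultimately show ?case
    by (simp add: differentiable_imp_continuous_on)
qed

lemma grad_nth: "grad f x $ i = dderiv f (axis i 1) x"
  unfolding grad_def by simp

lemma Ck2_continuous_on_derivatives:
  assumes "Ck 2 U f"
  shows "continuous_on U (\<lambda>x. grad f x $ i)" "continuous_on U (D2 f i j)"
proof -
  have C: "Ck (Suc (Suc 0)) U f" using assms by (simp add: numeral_2_eq_2)
  show "continuous_on U (\<lambda>x. grad f x $ i)"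
    unfolding grad_nth using Ck_imp_continuous_on[OF Ck_Suc_dderiv[OF C]] by simp
  show "continuous_on U (D2 f i j)"
    unfolding D2_def using Ck_imp_continuous_on[OF Ck_Suc_dderiv[OF Ck_Suc_dderiv[OF C]]] by simp
qed

lemma grad_D2_cong_open:
  assumes "open V" "z \<in> V" "\<And>x. x \<in> V \<Longrightarrow> f x = g x"
  shows "grad f z = grad g z" "D2 f i j z = D2 g i j z"
proof -
  have d: "dderiv f v x = dderiv g v x" if "x \<in> V" for v x
    using dderiv_cong_open[OF assms(1) that assms(3)] .
  then show "grad f z = grad g z"
    using assms(2) by (simp add: vec_eq_iff grad_nth)
  show "D2 f i j z = D2 g i j z"
    unfolding D2_def by (rule dderiv_cong_open[OF assms(1,2)]) (rule d)
qed

lemma grad_D2_compose_real: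
  assumes "open W" "Ck 2 W d" "z \<in> W"
    and \<phi>: "\<And>t. (\<phi> has_real_derivative \<phi>' t) (at t)" and \<phi>': "\<And>t. (\<phi>' has_real_derivative \<phi>'' t) (at t)"
  shows "grad (\<lambda>x. \<phi> (d x)) z = \<phi>' (d z) *\<^sub>R grad d z"
    and "D2 (\<lambda>x. \<phi> (d x)) i j z = \<phi>' (d z) * D2 d i j z + \<phi>'' (d z) * (grad d z $ i * grad d z $ j)"
proof -
  have C: "Ck (Suc (Suc 0)) W d" using assms(2) by (simp add: numeral_2_eq_2)
  note diff = Ck_Suc_imp_differentiable_at[OF _ assms(1)]
  have d_diff: "d differentiable (at x)" if "x \<in> W" for x
    using diff[OF C that] .
  have grad_comp: "dderiv (\<lambda>x. \<phi> (d x)) v x = \<phi>' (d x) * dderiv d v x" if "x \<in> W" for v x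
    by (rule dderiv_compose_at[OF \<phi> d_diff[OF that]])
  then show "grad (\<lambda>x. \<phi> (d x)) z = \<phi>' (d z) *\<^sub>R grad d z"
    using assms(3) by (simp add: vec_eq_iff grad_nth)
  have "\<phi>' differentiable (at t)" for t
    using \<phi>' unfolding has_field_derivative_def differentiable_def by blast
  then have \<phi>'_d_diff: "(\<lambda>x. \<phi>' (d x)) differentiable (at z)"
    using differentiable_chain_at[OF d_diff[OF assms(3)]] by (simp add: o_def) blast
  have "D2 (\<lambda>x. \<phi> (d x)) i j z = dderiv (\<lambda>x. \<phi>' (d x) * dderiv d (axis j 1) x) (axis i 1) z"
    unfolding D2_def by (rule dderiv_cong_open[OF assms(1,3)]) (simp add: grad_comp)
  also have "\<dots> = \<phi>' (d z) * D2 d i j z + dderiv (\<lambda>x. \<phi>' (d x)) (axis i 1) z * grad d z $ j"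
    unfolding D2_def grad_nth
    by (rule dderiv_mult_at[OF \<phi>'_d_diff diff[OF Ck_Suc_dderiv[OF C] assms(3)]]) simp
  also have "dderiv (\<lambda>x. \<phi>' (d x)) (axis i 1) z = \<phi>'' (d z) * grad d z $ i"
    unfolding grad_nth by (rule dderiv_compose_at[OF \<phi>' d_diff[OF assms(3)]])
  finally show "D2 (\<lambda>x. \<phi> (d x)) i j z = \<phi>' (d z) * D2 d i j z + \<phi>'' (d z) * (grad d z $ i * grad d z $ j)"
    by (simp add: algebra_simps)
qed

definition powr_nth_deriv :: "real \<Rightarrow> nat \<Rightarrow> real \<Rightarrow> real" where
  "powr_nth_deriv a j t = (\<Prod>i<j. a - real i) * t powr (a - real j)"

lemma has_real_derivative_powr_nth_deriv:
  assumes "t > 0"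
  shows "(powr_nth_deriv a j has_real_derivative powr_nth_deriv a (Suc j) t) (at t)"
proof -
  have "((\<lambda>t. (\<Prod>i<j. a - real i) * t powr (a - real j)) has_real_derivative
      (\<Prod>i<j. a - real i) * ((a - real j) * t powr (a - real j - 1))) (at t)"
    by (intro DERIV_cmult has_real_derivative_powr assms)
  then show ?thesis
    unfolding powr_nth_deriv_def[abs_def] by (simp add: algebra_simps)
qed

lemma continuous_on_powr_nth_deriv: "continuous_on {0<..} (powr_nth_deriv a j)"
  unfolding powr_nth_deriv_def[abs_def] by (intro continuous_intros) auto

lemma Ck_inverse_sqrt:
  assumes "open U" "Ck k U g" "\<And>x. x \<in> U \<Longrightarrow> g x > 0"
  shows "Ck k U (\<lambda>x. 1 / sqrt (g x))"
proof (rule Ck_cong_open[OF assms(1)])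
  show "Ck k U (\<lambda>x. powr_nth_deriv (-1/2) 0 (g x))"
    by (rule Ck_compose_real[where S = "{0<..}"])
       (use assms has_real_derivative_powr_nth_deriv continuous_on_powr_nth_deriv in auto)
  show "powr_nth_deriv (-1/2) 0 (g x) = 1 / sqrt (g x)" if "x \<in> U" for x
    using assms(3)[OF that] by (simp add: powr_nth_deriv_def powr_minus_divide powr_half_sqrt)
qed

lemma has_real_derivative_max0_power:
  assumes "n \<ge> 1"
  shows "((\<lambda>s. max s 0 ^ Suc n) has_real_derivative real (Suc n) * max t 0 ^ n) (at t)"
proof -
  consider "t < 0" | "t = 0" | "t > 0" by linarith
  then show ?thesis
  proof cases
    case 1
    have "((\<lambda>s. 0) has_real_derivative real (Suc n) * max t 0 ^ n) (at t)"
      using 1 assms by (simp add: zero_power)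
    then show ?thesis
      by (rule has_field_derivative_transform_within_open[where S = "{..<0}"]) (use 1 in auto)
  next
    case 2
    have "max z 0 ^ Suc n - max 0 0 ^ Suc n = max z 0 ^ n * (z - 0)" for z :: real
      using assms by (cases "z \<ge> 0") auto
    moreover have "isCont (\<lambda>z::real. max z 0 ^ n) 0"
      by (intro continuous_intros)
    ultimately show ?thesis
      unfolding CARAT_DERIV 2 using assms by (intro exI[of _ "\<lambda>z. max z 0 ^ n"]) auto
  next
    case 3
    have "((\<lambda>s. s ^ Suc n) has_real_derivative real (Suc n) * max t 0 ^ n) (at t)"
      using 3 DERIV_pow[of "Suc n" t] by simp
    then show ?thesis
      by (rule has_field_derivative_transform_within_open[where S = "{0<..}"]) (use 3 in auto)
  qed
qed

text \<open>\<open>profile K j\<close> is the \<open>j\<close>-th derivative of the profile \<open>\<phi> = profile K 0\<close>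
  (\<open>j \<le> 2\<close>).\<close>

definition profile :: "real \<Rightarrow> nat \<Rightarrow> real \<Rightarrow> real" where
  "profile K j t =
    (if j = 0 then K\<^sup>2 / 3 * max (t + 1/K) 0 ^ 3 - 1 / (3 * K)
     else if j = 1 then K\<^sup>2 * max (t + 1/K) 0 ^ 2
     else 2 * K\<^sup>2 * max (t + 1/K) 0)"

lemma profile_eqs:
  "profile K 0 = (\<lambda>t. K\<^sup>2 / 3 * max (t + 1/K) 0 ^ 3 - 1 / (3 * K))"
  "profile K 1 = (\<lambda>t. K\<^sup>2 * max (t + 1/K) 0 ^ 2)"
  "profile K 2 = (\<lambda>t. 2 * K\<^sup>2 * max (t + 1/K) 0)"
  by (simp_all add: fun_eq_iff profile_def)

lemma has_real_derivative_profile: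
  "(profile K 0 has_real_derivative profile K 1 t) (at t)"
  "(profile K 1 has_real_derivative profile K 2 t) (at t)"
proof -
  have shift: "((\<lambda>t. t + 1/K) has_real_derivative 1) (at t)"
    by (auto intro!: derivative_eq_intros)
  have "((\<lambda>t. max (t + 1/K) 0 ^ Suc m) has_real_derivative real (Suc m) * max (t + 1/K) 0 ^ m) (at t)"
    if "m \<ge> 1" for m
    using DERIV_chain2[OF has_real_derivative_max0_power[OF that] shift] by simp
  from this[of 2] this[of 1]
  have "((\<lambda>t. max (t + 1/K) 0 ^ 3) has_real_derivative 3 * max (t + 1/K) 0 ^ 2) (at t)"
    "((\<lambda>t. max (t + 1/K) 0 ^ 2) has_real_derivative 2 * max (t + 1/K) 0) (at t)"
    by (simp_all add: numeral_3_eq_3 numeral_2_eq_2)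
  from DERIV_diff[OF DERIV_cmult[OF this(1), of "K\<^sup>2 / 3"] DERIV_const] DERIV_cmult[OF this(2), of "K\<^sup>2"]
  show "(profile K 0 has_real_derivative profile K 1 t) (at t)"
    "(profile K 1 has_real_derivative profile K 2 t) (at t)"
    unfolding profile_eqs by (simp_all add: mult.assoc mult.left_commute)
qed

lemma continuous_on_profile: "continuous_on S (profile K 2)"
  unfolding profile_eqs by (intro continuous_intros)

lemma profile_at_0: "K > 0 \<Longrightarrow> profile K 0 0 = 0 \<and> profile K 1 0 = 1 \<and> profile K 2 0 = 2 * K"
  unfolding profile_def by (simp add: power2_eq_square power3_eq_cube field_simps)

lemma profile_neg:
  assumes "K > 0" "t < 0"
  shows "profile K 0 t < 0"
proof -
  have "max (t + 1/K) 0 ^ 3 < (1/K) ^ 3"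
    using assms by (intro power_strict_mono) auto
  then have "K\<^sup>2 / 3 * max (t + 1/K) 0 ^ 3 < K\<^sup>2 / 3 * (1/K) ^ 3"
    using assms by simp
  also have "\<dots> = 1 / (3 * K)"
    using assms by (simp add: power2_eq_square power3_eq_cube field_simps)
  finally show ?thesis unfolding profile_def by simp
qed

lemma profile_const: "K > 0 \<Longrightarrow> t \<le> -1/K \<Longrightarrow> profile K 0 t = - 1 / (3 * K)"
  unfolding profile_def by simp

section \<open>Bilinear forms given by coefficient matrices\<close>

definition bilinear_form :: "('n::finite \<Rightarrow> 'n \<Rightarrow> real) \<Rightarrow> real^'n \<Rightarrow> real^'n \<Rightarrow> real" where
  "bilinear_form B u w = (\<Sum>i\<in>UNIV. \<Sum>j\<in>UNIV. B i j * u$i * w$j)"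

lemma bilinear_form_add_left: "bilinear_form B (u + u') w = bilinear_form B u w + bilinear_form B u' w"
  unfolding bilinear_form_def by (simp add: algebra_simps sum.distrib)

lemma bilinear_form_add_right: "bilinear_form B u (w + w') = bilinear_form B u w + bilinear_form B u w'"
  unfolding bilinear_form_def by (simp add: algebra_simps sum.distrib)

lemma bilinear_form_scaleR_left: "bilinear_form B (c *\<^sub>R u) w = c * bilinear_form B u w"
  unfolding bilinear_form_def by (simp add: sum_distrib_left algebra_simps)

lemma bilinear_form_scaleR_right: "bilinear_form B u (c *\<^sub>R w) = c * bilinear_form B u w"
  unfolding bilinear_form_def by (simp add: sum_distrib_left algebra_simps)

lemma bilinear_form_add_matrix:
  "bilinear_form (\<lambda>i j. A i j + B i j) u w = bilinear_form A u w + bilinear_form B u w"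
  unfolding bilinear_form_def by (simp add: algebra_simps sum.distrib)

lemma bilinear_form_diff_matrix:
  "bilinear_form (\<lambda>i j. A i j - B i j) u w = bilinear_form A u w - bilinear_form B u w"
  unfolding bilinear_form_def by (simp add: algebra_simps sum_subtractf)

lemma bilinear_form_cmult_matrix: "bilinear_form (\<lambda>i j. c * B i j) u w = c * bilinear_form B u w"
  unfolding bilinear_form_def by (simp add: sum_distrib_left algebra_simps)

lemma bilinear_form_outer: "bilinear_form (\<lambda>i j. p$i * q$j) u w = (p \<bullet> u) * (q \<bullet> w)"
  unfolding bilinear_form_def inner_vec_def sum_product by (intro sum.cong refl) (simp add: algebra_simps)

lemma bilinear_form_bound:
  fixes B :: "'n::finite \<Rightarrow> 'n \<Rightarrow> real"
  assumes "\<And>i j. \<bar>B i j\<bar> \<le> M"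
  shows "\<bar>bilinear_form B u w\<bar> \<le> (M * (real CARD('n))\<^sup>2) * norm u * norm w"
proof -
  have "\<bar>B i j * u$i * w$j\<bar> \<le> M * norm u * norm w" for i j
    unfolding abs_mult using assms[of i j]
    by (intro mult_mono component_le_norm_cart) (auto intro: order_trans[OF abs_ge_zero])
  then have "\<bar>bilinear_form B u w\<bar> \<le> (\<Sum>i\<in>(UNIV::'n set). \<Sum>j\<in>(UNIV::'n set). M * norm u * norm w)"
    unfolding bilinear_form_def
    by (intro order_trans[OF sum_abs sum_mono] order_trans[OF sum_abs sum_mono])
  then show ?thesis by (simp add: power2_eq_square mult_ac)
qed

lemma bilinear_form_ge_norm_sq:
  assumes "\<And>\<eta>. P \<eta> \<Longrightarrow> norm \<eta> = 1 \<Longrightarrow> \<delta> \<le> bilinear_form B \<eta> \<eta>"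
    and "\<And>\<eta> c. P \<eta> \<Longrightarrow> P (c *\<^sub>R \<eta>)" and "P \<xi>"
  shows "\<delta> * (norm \<xi>)\<^sup>2 \<le> bilinear_form B \<xi> \<xi>"
proof (cases "\<xi> = 0")
  case True
  then show ?thesis by (simp add: bilinear_form_def)
next
  case False
  define \<eta> where "\<eta> = (1 / norm \<xi>) *\<^sub>R \<xi>"
  have "\<delta> \<le> bilinear_form B \<eta> \<eta>"
    using False assms unfolding \<eta>_def by simp
  moreover have "bilinear_form B \<xi> \<xi> = (norm \<xi>)\<^sup>2 * bilinear_form B \<eta> \<eta>"
    using False unfolding \<eta>_def
    by (simp add: bilinear_form_scaleR_left bilinear_form_scaleR_right power2_eq_square)
  ultimately show ?thesis by (simp add: mult.commute[of "(norm \<xi>)\<^sup>2"] mult_right_mono)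
qed

lemma unit_orthogonal_decomposition:
  fixes v \<xi> :: "'a::real_inner"
  assumes "norm v = 1"
  shows "(\<xi> - (v \<bullet> \<xi>) *\<^sub>R v) \<bullet> v = 0" "(norm (\<xi> - (v \<bullet> \<xi>) *\<^sub>R v))\<^sup>2 = (norm \<xi>)\<^sup>2 - (v \<bullet> \<xi>)\<^sup>2"
proof -
  have vv: "v \<bullet> v = 1" using assms by (simp add: dot_square_norm)
  then show "(\<xi> - (v \<bullet> \<xi>) *\<^sub>R v) \<bullet> v = 0" by (simp add: inner_diff_left) (simp add: inner_commute)
  show "(norm (\<xi> - (v \<bullet> \<xi>) *\<^sub>R v))\<^sup>2 = (norm \<xi>)\<^sup>2 - (v \<bullet> \<xi>)\<^sup>2"
    unfolding power2_norm_eq_inner using vv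
    by (simp add: inner_diff_left inner_diff_right inner_commute power2_eq_square algebra_simps)
qed

lemma two_mult_le_half_plus_square_div:
  fixes x \<delta> :: real
  assumes "\<delta> > 0"
  shows "2 * x \<le> \<delta> / 2 + 2 * x\<^sup>2 / \<delta>"
proof -
  have "0 \<le> (\<delta> - 2 * x)\<^sup>2 / (2 * \<delta>)" using assms by simp
  also have "\<dots> = \<delta> / 2 + 2 * x\<^sup>2 / \<delta> - 2 * x"
    using assms by (simp add: power2_eq_square field_simps)
  finally show ?thesis by simp
qed

text \<open>Writing \<open>\<xi> = t + s v\<close> with \<open>t \<bottom> v\<close>, the cross terms are at most
  \<open>2 L \<bar>s\<bar> \<le> \<delta>/2 + 2 L\<^sup>2 s\<^sup>2 / \<delta>\<close>, which the penalty \<open>2K s\<^sup>2\<close> absorbs.\<close>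

lemma bilinear_form_normal_penalty:
  fixes B :: "'n::finite \<Rightarrow> 'n \<Rightarrow> real" and v :: "real^'n"
  assumes v: "norm v = 1" and B: "\<And>i j. \<bar>B i j\<bar> \<le> M" and "\<delta> > 0"
    and tangential: "\<And>t. norm t = 1 \<Longrightarrow> t \<bullet> v = 0 \<Longrightarrow> \<delta> \<le> bilinear_form B t t"
    and K: "\<delta> + M * (real CARD('n))\<^sup>2 + 2 * (M * (real CARD('n))\<^sup>2)\<^sup>2 / \<delta> \<le> 2 * K"
    and "norm \<xi> = 1"
  shows "\<delta> / 2 \<le> bilinear_form B \<xi> \<xi> + 2 * K * (v \<bullet> \<xi>)\<^sup>2"
proof -
  define L where "L = M * (real CARD('n))\<^sup>2"
  define s where "s = v \<bullet> \<xi>"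
  define t where "t = \<xi> - s *\<^sub>R v"
  have "0 \<le> L" using B[of undefined undefined] unfolding L_def by simp
  have L: "\<bar>bilinear_form B u w\<bar> \<le> L * norm u * norm w" for u w
    unfolding L_def by (rule bilinear_form_bound[OF B])
  have tv: "t \<bullet> v = 0" and nt: "(norm t)\<^sup>2 = 1 - s\<^sup>2"
    using unit_orthogonal_decomposition[OF v, of \<xi>] \<open>norm \<xi> = 1\<close> unfolding t_def s_def by simp_all
  then have "L * norm t \<le> L"
    using \<open>0 \<le> L\<close> abs_square_le_1[of "norm t"] zero_le_power2[of s] by (simp add: mult_left_le)
  then have "\<bar>bilinear_form B t v\<bar> \<le> L" "\<bar>bilinear_form B v t\<bar> \<le> L" "\<bar>bilinear_form B v v\<bar> \<le> L"
    using L[of t v] L[of v t] L[of v v] v by auto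
  then have "\<bar>s * bilinear_form B t v\<bar> \<le> L * \<bar>s\<bar>" "\<bar>s * bilinear_form B v t\<bar> \<le> L * \<bar>s\<bar>"
    "\<bar>s\<^sup>2 * bilinear_form B v v\<bar> \<le> L * s\<^sup>2"
    by (auto simp: abs_mult mult.commute[of L] intro: mult_left_mono mult_right_mono)
  moreover have "\<delta> * (norm t)\<^sup>2 \<le> bilinear_form B t t"
    by (rule bilinear_form_ge_norm_sq[where P = "\<lambda>t. t \<bullet> v = 0"])
       (use tangential tv in \<open>auto simp: inner_scaleR_left\<close>)
  moreover have "bilinear_form B \<xi> \<xi> =
      bilinear_form B t t + s * bilinear_form B t v + s * bilinear_form B v t + s\<^sup>2 * bilinear_form B v v"
  proof -
    have "\<xi> = t + s *\<^sub>R v" unfolding t_def by simp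
    then show ?thesis
      by (simp add: bilinear_form_add_left bilinear_form_add_right bilinear_form_scaleR_left
          bilinear_form_scaleR_right power2_eq_square algebra_simps)
  qed
  moreover have "2 * (L * \<bar>s\<bar>) \<le> \<delta> / 2 + 2 * L\<^sup>2 * s\<^sup>2 / \<delta>"
    using two_mult_le_half_plus_square_div[OF \<open>\<delta> > 0\<close>, of "L * \<bar>s\<bar>"] by (simp add: power_mult_distrib)
  moreover have "(\<delta> + L + 2 * L\<^sup>2 / \<delta>) * s\<^sup>2 \<le> 2 * K * s\<^sup>2"
    using K unfolding L_def by (intro mult_right_mono) auto
  then have "\<delta> * s\<^sup>2 + L * s\<^sup>2 + 2 * L\<^sup>2 * s\<^sup>2 / \<delta> \<le> 2 * K * s\<^sup>2"
    by (simp add: algebra_simps)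
  ultimately show ?thesis
    unfolding s_def[symmetric] nt by (simp add: right_diff_distrib abs_le_iff)
qed

lemma infdist_lt_imp_mem_open:
  fixes S :: "'a::heine_borel set"
  assumes "compact S" "S \<noteq> {}" "open W" "S \<subseteq> W"
  obtains r where "r > 0" "\<And>x. infdist x S < r \<Longrightarrow> x \<in> W"
proof -
  obtain r where "r > 0" and r: "(\<Union>x\<in>S. ball x r) \<subseteq> W"
    using compact_subset_open_imp_ball_epsilon_subset[OF assms(1,3,4)] .
  show ?thesis
  proof (rule that[OF \<open>r > 0\<close>])
    fix x assume "infdist x S < r"
    moreover obtain z where "z \<in> S" "infdist x S = dist x z"
      using infdist_attains_inf[OF compact_imp_closed[OF assms(1)] assms(2)] by blast
    ultimately have "x \<in> ball z r" by (simp add: dist_commute)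
    then show "x \<in> W" using r \<open>z \<in> S\<close> by blast
  qed
qed

lemma compact_negative_bounded_away:
  fixes f :: "'a::topological_space \<Rightarrow> real"
  assumes "compact A" "continuous_on A f" "\<And>x. x \<in> A \<Longrightarrow> f x < 0"
  obtains m where "m > 0" "\<And>x. x \<in> A \<Longrightarrow> f x \<le> - m"
proof (cases "A = {}")
  case True
  then show ?thesis using that[of 1] by simp
next
  case False
  obtain x0 where "x0 \<in> A" "\<And>x. x \<in> A \<Longrightarrow> f x \<le> f x0"
    using continuous_attains_sup[OF assms(1) False assms(2)] by blast
  then show ?thesis using that[of "- f x0"] assms(3) by force
qed

lemma compact_continuous_entries_bounded:
  fixes F :: "'a::topological_space \<Rightarrow> 'i::finite \<Rightarrow> 'j::finite \<Rightarrow> real"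
  assumes "compact S" "\<And>i j. continuous_on S (\<lambda>p. F p i j)"
  obtains M where "\<And>p i j. p \<in> S \<Longrightarrow> \<bar>F p i j\<bar> \<le> M"
proof -
  define G where "G p = (\<Sum>i\<in>UNIV. \<Sum>j\<in>UNIV. \<bar>F p i j\<bar>)" for p
  have "continuous_on S G"
    unfolding G_def by (intro continuous_intros assms(2))
  then have "bounded (G ` S)"
    by (rule compact_imp_bounded[OF compact_continuous_image[OF _ assms(1)]])
  then obtain M where M: "\<And>p. p \<in> S \<Longrightarrow> G p \<le> M"
    by (auto simp: bounded_iff intro: order_trans[OF abs_ge_self])
  have "\<bar>F p i j\<bar> \<le> (\<Sum>j\<in>UNIV. \<bar>F p i j\<bar>)" "(\<Sum>j\<in>UNIV. \<bar>F p i j\<bar>) \<le> G p" for p i j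
    unfolding G_def by (rule member_le_sum; simp add: sum_nonneg)+
  then show ?thesis using that M by (meson order_trans)
qed

lemma compact_lower_bound_near_subset:
  fixes f :: "'a::metric_space \<Rightarrow> real"
  assumes "compact S" "continuous_on S f" "T \<subseteq> S" "\<And>q. q \<in> T \<Longrightarrow> \<delta> \<le> f q" "e > 0"
  obtains d where "d > 0" "\<And>p q. p \<in> S \<Longrightarrow> q \<in> T \<Longrightarrow> dist p q < d \<Longrightarrow> \<delta> - e \<le> f p"
proof -
  obtain d where "d > 0" and d: "\<And>p q. p \<in> S \<Longrightarrow> q \<in> S \<Longrightarrow> dist q p < d \<Longrightarrow> dist (f q) (f p) < e"
    using compact_uniformly_continuous[OF assms(2,1)] assms(5)
    unfolding uniformly_continuous_on_def by metis
  show ?thesis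
  proof (rule that[OF \<open>d > 0\<close>])
    fix p q assume "p \<in> S" "q \<in> T" "dist p q < d"
    then have "dist (f q) (f p) < e" using d assms(3) by (auto simp: dist_commute)
    then show "\<delta> - e \<le> f p" using assms(4)[OF \<open>q \<in> T\<close>] by (simp add: dist_real_def)
  qed
qed

lemma frontier_in_zero_set:
  fixes \<rho> :: "'a::topological_space \<Rightarrow> real"
  assumes "open \<Omega>" "open W" "frontier \<Omega> \<subseteq> W" "continuous_on W \<rho>"
    and "\<And>x. x \<in> W \<Longrightarrow> x \<in> \<Omega> \<longleftrightarrow> \<rho> x < 0" and z: "z \<in> frontier \<Omega>"
  shows "\<rho> z = 0"
proof -
  have "z \<in> W" "z \<notin> \<Omega>" "z \<in> closure \<Omega>"
    using z assms(1,3) by (auto simp: frontier_def interior_open)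
  then have "0 \<le> \<rho> z" using assms(5) by force
  moreover have "\<not> 0 < \<rho> z"
  proof
    assume "0 < \<rho> z"
    let ?V = "W \<inter> \<rho> -` {0<..}"
    have "open ?V" by (rule continuous_open_preimage[OF assms(4,2)]) simp
    then obtain w where "w \<in> ?V" "w \<in> \<Omega>"
      using \<open>z \<in> W\<close> \<open>0 < \<rho> z\<close> \<open>z \<in> closure \<Omega>\<close> open_Int_closure_eq_empty by blast
    then show False using assms(5) by force
  qed
  ultimately show ?thesis by simp
qed

section \<open>Defining functions of the boundary\<close>

lemma Ck_inverse_norm_grad:
  assumes "open W" "Ck (Suc k) W \<rho>" "\<And>x. x \<in> W \<Longrightarrow> grad \<rho> x \<noteq> 0"
  shows "Ck k W (\<lambda>x. 1 / norm (grad \<rho> x))"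
proof (rule Ck_cong_open[OF assms(1)])
  define S where "S x = (\<Sum>i\<in>UNIV. dderiv \<rho> (axis i 1) x * dderiv \<rho> (axis i 1) x)" for x
  have norm_eq: "norm (grad \<rho> x) = sqrt (S x)" for x
    unfolding norm_vec_def L2_set_def S_def by (simp add: power2_eq_square grad_nth)
  have "Ck k W S"
    unfolding S_def by (rule Ck_sum[OF assms(1)]) (use assms(2) in \<open>simp_all add: Ck_mult[OF assms(1)]\<close>)
  moreover have "S x > 0" if "x \<in> W" for x
    using assms(3)[OF that] norm_eq[of x] by (metis real_sqrt_gt_0_iff zero_less_norm_iff)
  ultimately show "Ck k W (\<lambda>x. 1 / sqrt (S x))"
    by (rule Ck_inverse_sqrt[OF assms(1)])
  show "1 / sqrt (S x) = 1 / norm (grad \<rho> x)" for x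
    by (simp add: norm_eq)
qed

lemma grad_D2_mult_at_zero:
  fixes \<rho> :: "real^'n \<Rightarrow> real"
  assumes "open W" "Ck 2 W \<rho>" "Ck 2 W R" "z \<in> W" "\<rho> z = 0"
    and \<nu>: "\<And>x. x \<in> W \<Longrightarrow> \<nu> x = R x *\<^sub>R grad \<rho> x"
  shows "grad (\<lambda>x. \<rho> x * R x) z = \<nu> z"
    and "D2 (\<lambda>x. \<rho> x * R x) i j z = Dvec \<nu> i j z + grad \<rho> z $ i * grad R z $ j"
proof -
  have \<rho>_diff: "\<rho> differentiable (at x)" "dderiv \<rho> (axis j 1) differentiable (at x)"
    and R_diff: "R differentiable (at x)" "dderiv R (axis j 1) differentiable (at x)" if "x \<in> W" for x j
  proof -
    have C: "Ck (Suc (Suc 0)) W \<rho>" "Ck (Suc (Suc 0)) W R" using assms(2,3) by (simp_all add: numeral_2_eq_2)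
    note diff = Ck_Suc_imp_differentiable_at[OF _ assms(1) that]
    from diff[OF C(1)] diff[OF Ck_Suc_dderiv[OF C(1)]] diff[OF C(2)] diff[OF Ck_Suc_dderiv[OF C(2)]]
    show "\<rho> differentiable (at x)" "dderiv \<rho> (axis j 1) differentiable (at x)"
      "R differentiable (at x)" "dderiv R (axis j 1) differentiable (at x)"
      by simp_all
  qed
  have \<nu>_nth: "\<nu> x $ j = R x * dderiv \<rho> (axis j 1) x" if "x \<in> W" for x j
    using \<nu>[OF that] by (simp add: grad_nth)
  have grad_d: "dderiv (\<lambda>x. \<rho> x * R x) (axis j 1) x = \<nu> x $ j + \<rho> x * dderiv R (axis j 1) x"
    if "x \<in> W" for x j
    using dderiv_mult_at[OF \<rho>_diff(1) R_diff(1), OF that that] \<nu>_nth[OF that] by (simp add: algebra_simps)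
  then show "grad (\<lambda>x. \<rho> x * R x) z = \<nu> z"
    using assms(4,5) by (simp add: vec_eq_iff grad_nth)
  have \<nu>_diff: "(\<lambda>w. \<nu> w $ j) differentiable (at z)"
    by (rule differentiable_at_cong_open[OF assms(1,4) _ differentiable_mult[OF R_diff(1) \<rho>_diff(2)[of _ j]]])
       (simp_all add: \<nu>_nth assms(4))
  have "D2 (\<lambda>x. \<rho> x * R x) i j z = dderiv (\<lambda>w. \<nu> w $ j + \<rho> w * dderiv R (axis j 1) w) (axis i 1) z"
    unfolding D2_def by (rule dderiv_cong_open[OF assms(1,4)]) (simp add: grad_d)
  also have "\<dots> = Dvec \<nu> i j z + dderiv (\<lambda>w. \<rho> w * dderiv R (axis j 1) w) (axis i 1) z"
    unfolding Dvec_def using \<nu>_diff \<rho>_diff(1)[OF assms(4)] R_diff(2)[OF assms(4)]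
    by (intro dderiv_add_at differentiable_mult) auto
  finally show "D2 (\<lambda>x. \<rho> x * R x) i j z = Dvec \<nu> i j z + grad \<rho> z $ i * grad R z $ j"
    using dderiv_mult_at[OF \<rho>_diff(1) R_diff(2), OF assms(4) assms(4)] assms(5) by (simp add: grad_nth)
qed

lemma normalized_defining_function:
  fixes \<Omega> :: "(real^'n) set"
  assumes "smooth_domain_normal \<Omega> \<nu>"
  obtains d W where "open W" "frontier \<Omega> \<subseteq> W" "Ck 2 W d"
    and "\<And>x. x \<in> W \<Longrightarrow> x \<in> \<Omega> \<longleftrightarrow> d x < 0"
    and "\<And>z. z \<in> frontier \<Omega> \<Longrightarrow> d z = 0 \<and> grad d z = \<nu> z \<and> norm (\<nu> z) = 1"
    and "\<And>z \<tau>. z \<in> frontier \<Omega> \<Longrightarrow> \<tau> \<bullet> \<nu> z = 0 \<Longrightarrow>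
           bilinear_form (\<lambda>i j. D2 d i j z) \<tau> \<tau> = bilinear_form (\<lambda>i j. Dvec \<nu> i j z) \<tau> \<tau>"
proof -
  obtain \<rho> W where W: "open W" "frontier \<Omega> \<subseteq> W" and "smooth_on W \<rho>"
    and inside: "\<And>x. x \<in> W \<Longrightarrow> x \<in> \<Omega> \<longleftrightarrow> \<rho> x < 0"
    and \<nu>: "\<And>x. x \<in> W \<Longrightarrow> grad \<rho> x \<noteq> 0 \<and> \<nu> x = (1 / norm (grad \<rho> x)) *\<^sub>R grad \<rho> x"
    using assms unfolding smooth_domain_normal_def by metis
  have "open \<Omega>" using assms unfolding smooth_domain_normal_def by simp
  have \<rho>: "Ck k W \<rho>" for k using \<open>smooth_on W \<rho>\<close> unfolding smooth_on_def by blast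
  define R where "R x = 1 / norm (grad \<rho> x)" for x
  have R: "Ck 2 W R"
    unfolding R_def[abs_def] using Ck_inverse_norm_grad[OF W(1) \<rho>[of "Suc 2"]] \<nu> by simp
  have R_pos: "R x > 0" if "x \<in> W" for x
    unfolding R_def using \<nu>[OF that] by simp
  have \<nu>_eq: "\<nu> x = R x *\<^sub>R grad \<rho> x" if "x \<in> W" for x
    unfolding R_def using \<nu>[OF that] by simp
  have z: "z \<in> W" "\<rho> z = 0" if "z \<in> frontier \<Omega>" for z
    using that W(2) frontier_in_zero_set[OF \<open>open \<Omega>\<close> W Ck_imp_continuous_on[OF \<rho>] inside] by auto
  note at_zero = grad_D2_mult_at_zero[OF W(1) \<rho> R _ _ \<nu>_eq]
  show ?thesis
  proof (rule that[OF W Ck_mult[OF W(1) \<rho> R]])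
    show "x \<in> \<Omega> \<longleftrightarrow> \<rho> x * R x < 0" if "x \<in> W" for x
      using inside[OF that] R_pos[OF that] by (simp add: mult_less_0_iff)
    show "\<rho> z * R z = 0 \<and> grad (\<lambda>x. \<rho> x * R x) z = \<nu> z \<and> norm (\<nu> z) = 1" if "z \<in> frontier \<Omega>" for z
      using z[OF that] at_zero(1)[OF z[OF that]] \<nu> by simp
    show "bilinear_form (\<lambda>i j. D2 (\<lambda>x. \<rho> x * R x) i j z) \<tau> \<tau> = bilinear_form (\<lambda>i j. Dvec \<nu> i j z) \<tau> \<tau>"
      if "z \<in> frontier \<Omega>" "\<tau> \<bullet> \<nu> z = 0" for z \<tau>
    proof -
      have "grad \<rho> z \<bullet> \<tau> = 0"
        using that(2) \<nu>_eq[of z] R_pos[of z] z[OF that(1)] by (auto simp: inner_commute)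
      then show ?thesis
        by (simp add: at_zero(2)[OF z[OF that(1)]] bilinear_form_add_matrix bilinear_form_outer)
    qed
  qed
qed

lemma defining_function_bounded_away_inside:
  fixes \<Omega> :: "(real^'n) set" and d :: "real^'n \<Rightarrow> real"
  assumes "bounded \<Omega>" "frontier \<Omega> \<noteq> {}" "open W" "frontier \<Omega> \<subseteq> W" "continuous_on W d"
    and inside: "\<And>x. x \<in> W \<Longrightarrow> x \<in> \<Omega> \<longleftrightarrow> d x < 0"
  obtains r m where "r > 0" "m > 0" "\<And>x. infdist x (frontier \<Omega>) < 2 * r \<Longrightarrow> x \<in> W"
    "\<And>x. x \<in> \<Omega> \<Longrightarrow> r / 2 \<le> infdist x (frontier \<Omega>) \<Longrightarrow> infdist x (frontier \<Omega>) \<le> r \<Longrightarrow> d x \<le> - m"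
proof -
  let ?F = "frontier \<Omega>"
  have "compact ?F" using assms(1) by (rule compact_frontier_bounded)
  obtain r\<^sub>0 where "r\<^sub>0 > 0" and "\<And>x. infdist x ?F < r\<^sub>0 \<Longrightarrow> x \<in> W"
    using infdist_lt_imp_mem_open[OF \<open>compact ?F\<close> assms(2-4)] by blast
  then obtain r where "r > 0" and near: "\<And>x. infdist x ?F < 2 * r \<Longrightarrow> x \<in> W"
    by (metis field_sum_of_halves half_gt_zero mult_2)
  define A where "A = closure \<Omega> \<inter> {x. r / 2 \<le> infdist x ?F \<and> infdist x ?F \<le> r}"
  have "compact A"
    unfolding A_def using assms(1)
    by (intro compact_Int_closed closed_Collect_conj closed_Collect_le continuous_intros continuous_on_infdist)
       (simp_all add: compact_closure)
  moreover have "A \<subseteq> W" "A \<subseteq> \<Omega>"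
    unfolding A_def using near \<open>r > 0\<close> closure_Un_frontier[of \<Omega>] by force+
  ultimately obtain m where "m > 0" and m: "\<And>x. x \<in> A \<Longrightarrow> d x \<le> - m"
    using compact_negative_bounded_away[of A d] inside continuous_on_subset[OF assms(5)] by blast
  show ?thesis
  proof (rule that[OF \<open>r > 0\<close> \<open>m > 0\<close> near])
    show "d x \<le> - m" if "x \<in> \<Omega>" "r / 2 \<le> infdist x ?F" "infdist x ?F \<le> r" for x
      using m[of x] that closure_subset[of \<Omega>] unfolding A_def by blast
  qed
qed

lemma profile_extension:
  fixes \<Omega> :: "(real^'n) set"
  assumes "bounded \<Omega>" "open \<Omega>" "frontier \<Omega> \<noteq> {}" "open W" "frontier \<Omega> \<subseteq> W" "Ck 2 W d"
    and inside: "\<And>x. x \<in> W \<Longrightarrow> x \<in> \<Omega> \<longleftrightarrow> d x < 0"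
  obtains r K\<^sub>0 where "r > 0" "K\<^sub>0 > 0" "\<And>x. infdist x (frontier \<Omega>) < r \<Longrightarrow> x \<in> W"
    and "\<And>K. K\<^sub>0 \<le> K \<Longrightarrow> \<exists>h U. open U \<and> closure \<Omega> \<subseteq> U \<and> Ck 2 U h \<and>
          (\<forall>x. infdist x (frontier \<Omega>) < r \<longrightarrow> h x = profile K 0 (d x))"
proof -
  let ?F = "frontier \<Omega>"
  obtain r m where "r > 0" "m > 0" and near: "\<And>x. infdist x ?F < 2 * r \<Longrightarrow> x \<in> W"
    and m: "\<And>x. x \<in> \<Omega> \<Longrightarrow> r / 2 \<le> infdist x ?F \<Longrightarrow> infdist x ?F \<le> r \<Longrightarrow> d x \<le> - m"
    by (rule defining_function_bounded_away_inside[OF assms(1,3-5) Ck_imp_continuous_on[OF assms(6)] inside])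
       (assumption | (rule that; assumption))+
  show ?thesis
  proof (rule that[of r "1/m"])
    show "0 < r" "0 < 1/m" using \<open>r > 0\<close> \<open>m > 0\<close> by simp_all
    show "x \<in> W" if "infdist x ?F < r" for x using near that \<open>r > 0\<close> by simp
    fix K assume "1/m \<le> K"
    moreover have "0 < 1/m" using \<open>m > 0\<close> by simp
    ultimately have "K > 0" by linarith
    then have "- m \<le> - (1/K)"
      using \<open>1/m \<le> K\<close> \<open>m > 0\<close> by (simp add: divide_le_eq le_divide_eq mult.commute)
    define h where "h x = (if infdist x ?F < r then profile K 0 (d x) else - 1 / (3 * K))" for x
    define V\<^sub>1 where "V\<^sub>1 = {x. infdist x ?F < r}"
    define V\<^sub>2 where "V\<^sub>2 = \<Omega> \<inter> {x. r/2 < infdist x ?F}"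
    have "open V\<^sub>1" "open V\<^sub>2"
      unfolding V\<^sub>1_def V\<^sub>2_def using assms(2)
      by (auto intro!: open_Collect_less continuous_intros continuous_on_infdist)
    have "V\<^sub>1 \<subseteq> W" unfolding V\<^sub>1_def using near \<open>r > 0\<close> by force
    have "Ck 2 W (\<lambda>x. profile K 0 (d x))"
      by (rule Ck_compose_real[where S = UNIV])
         (use assms(4,6) has_real_derivative_profile continuous_on_profile in
            \<open>auto simp: numeral_2_eq_2 less_Suc_eq\<close>)
    then have "Ck 2 V\<^sub>1 h"
      by (intro Ck_cong_open[OF \<open>open V\<^sub>1\<close>, OF _ Ck_subset_open[OF \<open>open V\<^sub>1\<close> \<open>V\<^sub>1 \<subseteq> W\<close>]])
         (auto simp: h_def V\<^sub>1_def)
    moreover have "Ck 2 V\<^sub>2 h"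
    proof (rule Ck_cong_open[OF \<open>open V\<^sub>2\<close> _ Ck_const])
      show "- 1 / (3 * K) = h x" if "x \<in> V\<^sub>2" for x
      proof (cases "infdist x ?F < r")
        case True
        then have "d x \<le> - (1/K)" using m[of x] that \<open>- m \<le> - (1/K)\<close> by (simp add: V\<^sub>2_def)
        then show ?thesis using True profile_const[OF \<open>K > 0\<close>] by (simp add: h_def)
      qed (simp add: h_def)
    qed
    moreover have "closure \<Omega> \<subseteq> V\<^sub>1 \<union> V\<^sub>2"
      unfolding V\<^sub>1_def V\<^sub>2_def using closure_Un_frontier[of \<Omega>] \<open>r > 0\<close> by force
    ultimately show "\<exists>h U. open U \<and> closure \<Omega> \<subseteq> U \<and> Ck 2 U h \<and>
        (\<forall>x. infdist x ?F < r \<longrightarrow> h x = profile K 0 (d x))"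
      using Ck_Un_open[OF \<open>open V\<^sub>1\<close> \<open>open V\<^sub>2\<close>] \<open>open V\<^sub>1\<close> \<open>open V\<^sub>2\<close>
      by (intro exI[of _ h] exI[of _ "V\<^sub>1 \<union> V\<^sub>2"]) (auto simp: h_def)
  qed
qed

lemma grad_D2_profile_at_zero:
  assumes "open W" "Ck 2 W d" "z \<in> W" "d z = 0" "K > 0"
    and "open V" "z \<in> V" "\<And>x. x \<in> V \<Longrightarrow> h x = profile K 0 (d x)"
  shows "grad h z = grad d z" "D2 h i j z = D2 d i j z + 2 * K * (grad d z $ i * grad d z $ j)"
  using grad_D2_cong_open[OF assms(6-8)] profile_at_0[OF assms(5)] assms(4)
    grad_D2_compose_real[OF assms(1-3) has_real_derivative_profile]
  by simp_all

lemma hessian_form_bounded_on_frontier: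
  fixes \<Omega> :: "(real^'n) set" and Y :: "'y::heine_borel set"
    and a :: "'n \<Rightarrow> 'n \<Rightarrow> 'n \<Rightarrow> real^'n \<Rightarrow> 'y \<Rightarrow> real"
  assumes "bounded \<Omega>" "bounded Y" "open W" "frontier \<Omega> \<subseteq> W" "Ck 2 W d"
    and a_cont: "\<And>i j k. continuous_on (closure \<Omega> \<times> closure Y) (\<lambda>p. a i j k (fst p) (snd p))"
  obtains M where "\<And>z y i j. z \<in> frontier \<Omega> \<Longrightarrow> y \<in> Y \<Longrightarrow>
    \<bar>D2 d i j z - (\<Sum>k\<in>UNIV. a i j k z y * grad d z $ k)\<bar> \<le> M"
proof -
  let ?S = "frontier \<Omega> \<times> closure Y"
  define B where
    "B p i j = D2 d i j (fst p) - (\<Sum>k\<in>UNIV. a i j k (fst p) (snd p) * grad d (fst p) $ k)" for p i j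
  have "compact ?S"
    using assms(1,2) by (intro compact_Times compact_frontier_bounded) (simp_all add: compact_closure)
  moreover have "continuous_on ?S (\<lambda>p. B p i j)" for i j
  proof -
    have FW: "fst ` ?S \<subseteq> W" using assms(4) by auto
    note comp = continuous_on_compose2[OF _ continuous_on_fst[OF continuous_on_id] FW]
    have "continuous_on ?S (\<lambda>p. D2 d i j (fst p))" "continuous_on ?S (\<lambda>p. grad d (fst p) $ k)" for i j k
      using comp[OF Ck2_continuous_on_derivatives(2)[OF assms(5)]]
        comp[OF Ck2_continuous_on_derivatives(1)[OF assms(5)]] by simp_all
    moreover have "?S \<subseteq> closure \<Omega> \<times> closure Y" by (auto simp: frontier_def)
    then have "continuous_on ?S (\<lambda>p. a i j k (fst p) (snd p))" for i j k
      by (rule continuous_on_subset[OF a_cont])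
    ultimately show ?thesis
      unfolding B_def by (intro continuous_on_diff continuous_on_sum continuous_on_mult) simp_all
  qed
  ultimately obtain M where "\<And>p i j. p \<in> ?S \<Longrightarrow> \<bar>B p i j\<bar> \<le> M"
    by (rule compact_continuous_entries_bounded[where F = B]) blast+
  then show ?thesis using that closure_subset[of Y] unfolding B_def by fastforce
qed

lemma profile_defining_function:
  fixes \<Omega> :: "(real^'n) set"
  assumes dom: "smooth_domain_normal \<Omega> \<nu>"
  obtains d W r K\<^sub>0 where "open W" "frontier \<Omega> \<subseteq> W" "Ck 2 W d" "r > 0" "K\<^sub>0 > 0"
    and "\<And>z. z \<in> frontier \<Omega> \<Longrightarrow> grad d z = \<nu> z \<and> norm (\<nu> z) = 1"
    and "\<And>z \<tau>. z \<in> frontier \<Omega> \<Longrightarrow> \<tau> \<bullet> \<nu> z = 0 \<Longrightarrow>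
           bilinear_form (\<lambda>i j. D2 d i j z) \<tau> \<tau> = bilinear_form (\<lambda>i j. Dvec \<nu> i j z) \<tau> \<tau>"
    and "\<And>K. K\<^sub>0 \<le> K \<Longrightarrow> \<exists>h U. open U \<and> closure \<Omega> \<subseteq> U \<and> Ck 2 U h \<and>
          (\<forall>x\<in>\<Omega>. infdist x (frontier \<Omega>) < r \<longrightarrow> h x < 0) \<and>
          (\<forall>z\<in>frontier \<Omega>. grad h z = \<nu> z \<and> (\<forall>i j. D2 h i j z = D2 d i j z + 2 * K * (\<nu> z $ i * \<nu> z $ j)))"
proof -
  let ?F = "frontier \<Omega>"
  have "open \<Omega>" "bounded \<Omega>" "\<Omega> \<noteq> {}" using dom unfolding smooth_domain_normal_def by auto
  then have "?F \<noteq> {}" using frontier_not_empty not_bounded_UNIV by blast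
  obtain d W where W: "open W" "?F \<subseteq> W" and "Ck 2 W d"
    and inside: "\<And>x. x \<in> W \<Longrightarrow> x \<in> \<Omega> \<longleftrightarrow> d x < 0"
    and d_bd: "\<And>z. z \<in> ?F \<Longrightarrow> d z = 0 \<and> grad d z = \<nu> z \<and> norm (\<nu> z) = 1"
    and d_tangential: "\<And>z \<tau>. z \<in> ?F \<Longrightarrow> \<tau> \<bullet> \<nu> z = 0 \<Longrightarrow>
           bilinear_form (\<lambda>i j. D2 d i j z) \<tau> \<tau> = bilinear_form (\<lambda>i j. Dvec \<nu> i j z) \<tau> \<tau>"
    by (rule normalized_defining_function[OF dom]) (rule that; assumption)
  obtain r K\<^sub>0 where "r > 0" "K\<^sub>0 > 0" and near: "\<And>x. infdist x ?F < r \<Longrightarrow> x \<in> W"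
    and extension: "\<And>K. K\<^sub>0 \<le> K \<Longrightarrow> \<exists>h U. open U \<and> closure \<Omega> \<subseteq> U \<and> Ck 2 U h \<and>
          (\<forall>x. infdist x ?F < r \<longrightarrow> h x = profile K 0 (d x))"
    by (rule profile_extension[OF \<open>bounded \<Omega>\<close> \<open>open \<Omega>\<close> \<open>?F \<noteq> {}\<close> W \<open>Ck 2 W d\<close> inside])
       (assumption | (rule that; assumption))+
  show ?thesis
  proof (rule that[OF W \<open>Ck 2 W d\<close> \<open>r > 0\<close> \<open>K\<^sub>0 > 0\<close>])
    show "grad d z = \<nu> z \<and> norm (\<nu> z) = 1" if "z \<in> ?F" for z using d_bd[OF that] by simp
    fix K assume "K\<^sub>0 \<le> K"
    then have "K > 0" using \<open>K\<^sub>0 > 0\<close> by linarith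
    obtain h U where U: "open U" "closure \<Omega> \<subseteq> U" "Ck 2 U h"
      and h: "\<And>x. infdist x ?F < r \<Longrightarrow> h x = profile K 0 (d x)"
      using extension[OF \<open>K\<^sub>0 \<le> K\<close>] by auto
    have V: "open {x. infdist x ?F < r}"
      by (intro open_Collect_less continuous_intros continuous_on_infdist)
    have h_neg: "h x < 0" if "x \<in> \<Omega>" "infdist x ?F < r" for x
    proof -
      have "d x < 0" using inside[OF near[OF that(2)]] that(1) by simp
      then show ?thesis using h[OF that(2)] profile_neg[OF \<open>K > 0\<close>] by simp
    qed
    have h_bd: "grad h z = \<nu> z" "D2 h i j z = D2 d i j z + 2 * K * (\<nu> z $ i * \<nu> z $ j)"
      if "z \<in> ?F" for z i j
    proof -
      have "z \<in> W" "z \<in> {x. infdist x ?F < r}" using that W(2) \<open>r > 0\<close> by auto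
      from grad_D2_profile_at_zero[OF W(1) \<open>Ck 2 W d\<close> this(1) _ \<open>K > 0\<close> V this(2) h] d_bd[OF that]
      show "grad h z = \<nu> z" "D2 h i j z = D2 d i j z + 2 * K * (\<nu> z $ i * \<nu> z $ j)" by simp_all
    qed
    show "\<exists>h U. open U \<and> closure \<Omega> \<subseteq> U \<and> Ck 2 U h \<and>
        (\<forall>x\<in>\<Omega>. infdist x ?F < r \<longrightarrow> h x < 0) \<and>
        (\<forall>z\<in>?F. grad h z = \<nu> z \<and> (\<forall>i j. D2 h i j z = D2 d i j z + 2 * K * (\<nu> z $ i * \<nu> z $ j)))"
      by (intro exI[of _ h] exI[of _ U] conjI ballI allI impI) (simp_all add: U h_neg h_bd)
  qed (rule d_tangential)
qed

lemma boundary_positive_defining_function: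
  fixes \<Omega> :: "(real^'n) set" and Y :: "'y::heine_borel set"
    and a :: "'n \<Rightarrow> 'n \<Rightarrow> 'n \<Rightarrow> real^'n \<Rightarrow> 'y \<Rightarrow> real"
  assumes dom: "smooth_domain_normal \<Omega> \<nu>" and "bounded Y"
    and a_cont: "\<And>i j k. continuous_on (closure \<Omega> \<times> closure Y) (\<lambda>p. a i j k (fst p) (snd p))"
    and "\<delta>\<^sub>1 > 0"
    and convex: "\<And>z y \<tau>. z \<in> frontier \<Omega> \<Longrightarrow> y \<in> Y \<Longrightarrow> norm \<tau> = 1 \<Longrightarrow> \<tau> \<bullet> \<nu> z = 0 \<Longrightarrow>
        \<delta>\<^sub>1 \<le> bilinear_form (\<lambda>i j. Dvec \<nu> i j z - (\<Sum>k\<in>UNIV. a i j k z y * \<nu> z $ k)) \<tau> \<tau>"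
  obtains h U r where "open U" "closure \<Omega> \<subseteq> U" "Ck 2 U h" "r > 0"
    "\<And>z. z \<in> frontier \<Omega> \<Longrightarrow> grad h z = \<nu> z"
    "\<And>x. x \<in> \<Omega> \<Longrightarrow> infdist x (frontier \<Omega>) < r \<Longrightarrow> h x < 0"
    "\<And>z y \<xi>. z \<in> frontier \<Omega> \<Longrightarrow> y \<in> Y \<Longrightarrow> norm \<xi> = 1 \<Longrightarrow>
       \<delta>\<^sub>1 / 2 \<le> bilinear_form (\<lambda>i j. D2 h i j z - (\<Sum>k\<in>UNIV. a i j k z y * grad h z $ k)) \<xi> \<xi>"
proof -
  let ?F = "frontier \<Omega>"
  have "bounded \<Omega>" using dom unfolding smooth_domain_normal_def by simp
  obtain d W r K\<^sub>0 where W: "open W" "?F \<subseteq> W" "Ck 2 W d" and "r > 0" "K\<^sub>0 > 0"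
    and d_bd: "\<And>z. z \<in> ?F \<Longrightarrow> grad d z = \<nu> z \<and> norm (\<nu> z) = 1"
    and d_tangential: "\<And>z \<tau>. z \<in> ?F \<Longrightarrow> \<tau> \<bullet> \<nu> z = 0 \<Longrightarrow>
           bilinear_form (\<lambda>i j. D2 d i j z) \<tau> \<tau> = bilinear_form (\<lambda>i j. Dvec \<nu> i j z) \<tau> \<tau>"
    and profile: "\<And>K. K\<^sub>0 \<le> K \<Longrightarrow> \<exists>h U. open U \<and> closure \<Omega> \<subseteq> U \<and> Ck 2 U h \<and>
          (\<forall>x\<in>\<Omega>. infdist x ?F < r \<longrightarrow> h x < 0) \<and>
          (\<forall>z\<in>?F. grad h z = \<nu> z \<and> (\<forall>i j. D2 h i j z = D2 d i j z + 2 * K * (\<nu> z $ i * \<nu> z $ j)))"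
    by (rule profile_defining_function[OF dom]) (rule that; assumption)
  obtain M where M: "\<And>z y i j. z \<in> ?F \<Longrightarrow> y \<in> Y \<Longrightarrow>
      \<bar>D2 d i j z - (\<Sum>k\<in>UNIV. a i j k z y * grad d z $ k)\<bar> \<le> M"
    by (rule hessian_form_bounded_on_frontier[OF \<open>bounded \<Omega>\<close> \<open>bounded Y\<close> W a_cont])
       (rule that; assumption)
  define P where "P = \<delta>\<^sub>1 + M * (real CARD('n))\<^sup>2 + 2 * (M * (real CARD('n))\<^sup>2)\<^sup>2 / \<delta>\<^sub>1"
  define K where "K = max K\<^sub>0 (P / 2)"
  have "K\<^sub>0 \<le> K" "P \<le> 2 * K" unfolding K_def by linarith+
  obtain h U where U: "open U" "closure \<Omega> \<subseteq> U" "Ck 2 U h"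
    and h_neg: "\<forall>x\<in>\<Omega>. infdist x ?F < r \<longrightarrow> h x < 0"
    and h_bd: "\<forall>z\<in>?F. grad h z = \<nu> z \<and> (\<forall>i j. D2 h i j z = D2 d i j z + 2 * K * (\<nu> z $ i * \<nu> z $ j))"
    using profile[OF \<open>K\<^sub>0 \<le> K\<close>] by (elim exE conjE) (rule that; assumption)
  show ?thesis
  proof (rule that[OF U \<open>r > 0\<close>])
    show "grad h z = \<nu> z" if "z \<in> ?F" for z using h_bd that by blast
    show "h x < 0" if "x \<in> \<Omega>" "infdist x ?F < r" for x using h_neg that by blast
    fix z y and \<xi> :: "real^'n" assume z: "z \<in> ?F" and "y \<in> Y" "norm \<xi> = 1"
    define B where "B i j = D2 d i j z - (\<Sum>k\<in>UNIV. a i j k z y * \<nu> z $ k)" for i j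
    have "(\<lambda>i j. D2 h i j z - (\<Sum>k\<in>UNIV. a i j k z y * grad h z $ k)) =
        (\<lambda>i j. B i j + 2 * K * (\<nu> z $ i * \<nu> z $ j))"
      using h_bd z by (simp add: B_def fun_eq_iff)
    moreover have "\<delta>\<^sub>1 \<le> bilinear_form B \<tau> \<tau>" if "norm \<tau> = 1" "\<tau> \<bullet> \<nu> z = 0" for \<tau>
      using convex[OF z \<open>y \<in> Y\<close> that] d_tangential[OF z that(2)]
      by (simp add: B_def[abs_def] bilinear_form_diff_matrix)
    then have "\<delta>\<^sub>1 / 2 \<le> bilinear_form B \<xi> \<xi> + 2 * K * (\<nu> z \<bullet> \<xi>)\<^sup>2"
      using M[OF z \<open>y \<in> Y\<close>] d_bd[OF z] \<open>P \<le> 2 * K\<close> \<open>norm \<xi> = 1\<close>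
      by (intro bilinear_form_normal_penalty[OF _ _ \<open>\<delta>\<^sub>1 > 0\<close>]) (simp_all add: B_def P_def)
    ultimately show "\<delta>\<^sub>1 / 2 \<le> bilinear_form (\<lambda>i j. D2 h i j z - (\<Sum>k\<in>UNIV. a i j k z y * grad h z $ k)) \<xi> \<xi>"
      by (simp add: bilinear_form_add_matrix bilinear_form_cmult_matrix bilinear_form_outer power2_eq_square)
  qed
qed

lemma boundary_positivity_extends_to_strip:
  fixes \<Omega> :: "(real^'n) set" and Y :: "'y::heine_borel set"
    and Q :: "real^'n \<Rightarrow> 'y \<Rightarrow> 'n \<Rightarrow> 'n \<Rightarrow> real"
  assumes "bounded \<Omega>" "bounded Y" "\<delta> > 0"
    and Q_cont: "\<And>i j. continuous_on (closure \<Omega> \<times> closure Y) (\<lambda>p. Q (fst p) (snd p) i j)"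
    and boundary: "\<And>z y \<xi>. z \<in> frontier \<Omega> \<Longrightarrow> y \<in> Y \<Longrightarrow> norm \<xi> = 1 \<Longrightarrow> \<delta> \<le> bilinear_form (Q z y) \<xi> \<xi>"
  obtains \<epsilon> where "\<epsilon> > 0"
    "\<And>x y \<xi>. x \<in> strip \<Omega> \<epsilon> \<Longrightarrow> y \<in> Y \<Longrightarrow> \<delta> / 2 * (norm \<xi>)\<^sup>2 \<le> bilinear_form (Q x y) \<xi> \<xi>"
proof -
  define E where "E = (closure \<Omega> \<times> closure Y) \<times> sphere (0::real^'n) 1"
  define T where "T = (frontier \<Omega> \<times> Y) \<times> sphere (0::real^'n) 1"
  define F where "F p = bilinear_form (Q (fst (fst p)) (snd (fst p))) (snd p) (snd p)" for p
  have "compact E"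
    unfolding E_def using assms(1,2) by (intro compact_Times compact_sphere) (simp_all add: compact_closure)
  moreover have "continuous_on E F"
  proof -
    have "continuous_on E (\<lambda>p. Q (fst (fst p)) (snd (fst p)) i j)" for i j
      using continuous_on_compose2[OF Q_cont[of i j] continuous_on_fst[OF continuous_on_id], of E]
      unfolding E_def by force
    then show ?thesis
      unfolding F_def bilinear_form_def by (intro continuous_intros)
  qed
  moreover have "T \<subseteq> E"
    unfolding T_def E_def using closure_subset[of Y] by (auto simp: frontier_def)
  moreover have "\<delta> \<le> F q" if "q \<in> T" for q
    using that boundary unfolding T_def F_def by auto
  ultimately obtain e where "e > 0"
    and e: "\<And>p q. p \<in> E \<Longrightarrow> q \<in> T \<Longrightarrow> dist p q < e \<Longrightarrow> \<delta> - \<delta> / 2 \<le> F p"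
    by (rule compact_lower_bound_near_subset[where e = "\<delta> / 2"]) (use \<open>\<delta> > 0\<close> in auto)
  show ?thesis
  proof (rule that[OF \<open>e > 0\<close>])
    fix x y \<xi> assume x: "x \<in> strip \<Omega> e" and y: "y \<in> Y"
    have "frontier \<Omega> \<noteq> {}"
    proof (rule frontier_not_empty)
      show "\<Omega> \<noteq> {}" using x by (auto simp: strip_def)
      show "\<Omega> \<noteq> UNIV" using assms(1) not_bounded_UNIV by blast
    qed
    then obtain z where z: "z \<in> frontier \<Omega>" "infdist x (frontier \<Omega>) = dist x z"
      using infdist_attains_inf[OF frontier_closed] by blast
    have "\<delta> / 2 \<le> bilinear_form (Q x y) \<eta> \<eta>" if "norm \<eta> = 1" for \<eta>
      using e[of "((x, y), \<eta>)" "((z, y), \<eta>)"] x y z that closure_subset[of \<Omega>] closure_subset[of Y]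
      unfolding E_def T_def F_def strip_def by (auto simp: dist_Pair_Pair)
    then show "\<delta> / 2 * (norm \<xi>)\<^sup>2 \<le> bilinear_form (Q x y) \<xi> \<xi>"
      by (rule bilinear_form_ge_norm_sq[where P = "\<lambda>_. True"]) simp_all
  qed
qed

lemma convex_boundary_defining_function:
  fixes \<Omega> :: "(real^'n) set" and Y :: "'y::heine_borel set"
    and a :: "'n \<Rightarrow> 'n \<Rightarrow> 'n \<Rightarrow> real^'n \<Rightarrow> 'y \<Rightarrow> real"
  assumes dom: "smooth_domain_normal \<Omega> \<nu>" and "bounded Y"
    and a_cont: "\<And>i j k. continuous_on (closure \<Omega> \<times> closure Y) (\<lambda>p. a i j k (fst p) (snd p))"
    and "\<delta>\<^sub>1 > 0"
    and convex: "\<And>z y \<tau>. z \<in> frontier \<Omega> \<Longrightarrow> y \<in> Y \<Longrightarrow> norm \<tau> = 1 \<Longrightarrow> \<tau> \<bullet> \<nu> z = 0 \<Longrightarrow>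
        \<delta>\<^sub>1 \<le> bilinear_form (\<lambda>i j. Dvec \<nu> i j z - (\<Sum>k\<in>UNIV. a i j k z y * \<nu> z $ k)) \<tau> \<tau>"
  obtains h U \<epsilon> \<delta>\<^sub>0 where "open U" "closure \<Omega> \<subseteq> U" "Ck 2 U h" "\<epsilon> > 0" "\<delta>\<^sub>0 > 0"
    "\<And>z. z \<in> frontier \<Omega> \<Longrightarrow> grad h z = \<nu> z"
    "\<And>x. x \<in> strip \<Omega> \<epsilon> \<Longrightarrow> h x < 0"
    "\<And>x y \<xi>. x \<in> strip \<Omega> \<epsilon> \<Longrightarrow> y \<in> Y \<Longrightarrow>
       \<delta>\<^sub>0 * (norm \<xi>)\<^sup>2 \<le> bilinear_form (\<lambda>i j. D2 h i j x - (\<Sum>k\<in>UNIV. a i j k x y * grad h x $ k)) \<xi> \<xi>"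
proof -
  obtain h U r where U: "open U" "closure \<Omega> \<subseteq> U" "Ck 2 U h" and "r > 0"
    and grad_h: "\<And>z. z \<in> frontier \<Omega> \<Longrightarrow> grad h z = \<nu> z"
    and h_neg: "\<And>x. x \<in> \<Omega> \<Longrightarrow> infdist x (frontier \<Omega>) < r \<Longrightarrow> h x < 0"
    and boundary: "\<And>z y \<xi>. z \<in> frontier \<Omega> \<Longrightarrow> y \<in> Y \<Longrightarrow> norm \<xi> = 1 \<Longrightarrow>
       \<delta>\<^sub>1 / 2 \<le> bilinear_form (\<lambda>i j. D2 h i j z - (\<Sum>k\<in>UNIV. a i j k z y * grad h z $ k)) \<xi> \<xi>"
    by (rule boundary_positive_defining_function[OF dom \<open>bounded Y\<close> a_cont \<open>\<delta>\<^sub>1 > 0\<close> convex])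
       (assumption | (rule that; assumption))+
  have "bounded \<Omega>" using dom unfolding smooth_domain_normal_def by simp
  have Q_cont: "continuous_on (closure \<Omega> \<times> closure Y)
      (\<lambda>p. D2 h i j (fst p) - (\<Sum>k\<in>UNIV. a i j k (fst p) (snd p) * grad h (fst p) $ k))" for i j
  proof -
    have FU: "fst ` (closure \<Omega> \<times> closure Y) \<subseteq> U" using U(2) by auto
    note comp = continuous_on_compose2[OF _ continuous_on_fst[OF continuous_on_id] FU]
    have "continuous_on (closure \<Omega> \<times> closure Y) (\<lambda>p. D2 h i j (fst p))"
        "continuous_on (closure \<Omega> \<times> closure Y) (\<lambda>p. grad h (fst p) $ k)" for i j k
      using comp[OF Ck2_continuous_on_derivatives(2)[OF U(3)]]
        comp[OF Ck2_continuous_on_derivatives(1)[OF U(3)]] by simp_all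
    then show ?thesis
      using a_cont by (intro continuous_on_diff continuous_on_sum continuous_on_mult) simp_all
  qed
  obtain \<epsilon> where "\<epsilon> > 0" and strip: "\<And>x y \<xi>. x \<in> strip \<Omega> \<epsilon> \<Longrightarrow> y \<in> Y \<Longrightarrow>
      \<delta>\<^sub>1 / 2 / 2 * (norm \<xi>)\<^sup>2 \<le> bilinear_form (\<lambda>i j. D2 h i j x - (\<Sum>k\<in>UNIV. a i j k x y * grad h x $ k)) \<xi> \<xi>"
    by (rule boundary_positivity_extends_to_strip[OF \<open>bounded \<Omega>\<close> \<open>bounded Y\<close> _ Q_cont boundary])
       (use \<open>\<delta>\<^sub>1 > 0\<close> in auto)
  show ?thesis
  proof (rule that[OF U, of "min \<epsilon> r" "\<delta>\<^sub>1 / 4"])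
    show "min \<epsilon> r > 0" "\<delta>\<^sub>1 / 4 > 0" using \<open>\<epsilon> > 0\<close> \<open>r > 0\<close> \<open>\<delta>\<^sub>1 > 0\<close> by simp_all
    show "grad h z = \<nu> z" if "z \<in> frontier \<Omega>" for z using grad_h that .
    show "h x < 0" if "x \<in> strip \<Omega> (min \<epsilon> r)" for x using h_neg that by (simp add: strip_def)
    show "\<delta>\<^sub>1 / 4 * (norm \<xi>)\<^sup>2 \<le> bilinear_form (\<lambda>i j. D2 h i j x - (\<Sum>k\<in>UNIV. a i j k x y * grad h x $ k)) \<xi> \<xi>"
      if "x \<in> strip \<Omega> (min \<epsilon> r)" "y \<in> Y" for x y \<xi>
      using strip[of x y \<xi>] that by (simp add: strip_def)
  qed
qed

section \<open>Continuity of the cost coefficients\<close>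

lemma matrix_inv_cramer:
  fixes A :: "real^'n^'n"
  assumes "det A \<noteq> 0"
  shows "matrix_inv A $ i $ j = det (\<chi> r s. if s = i then axis j 1 $ r else A $ r $ s) / det A"
proof -
  have "invertible A" using assms invertible_det_nz by blast
  then have "A ** matrix_inv A = mat 1"
    unfolding matrix_inv_def invertible_def by (rule someI_ex[THEN conjunct1])
  then have "A *v (matrix_inv A *v axis j 1) = axis j 1"
    by (simp add: matrix_vector_mul_assoc)
  then have "matrix_inv A *v axis j 1 = (\<chi> k. det (\<chi> r s. if s = k then axis j 1 $ r else A $ r $ s) / det A)"
    using cramer[OF assms] by blast
  moreover have "(matrix_inv A *v axis j 1) $ i = matrix_inv A $ i $ j"
    by (simp add: matrix_vector_mult_def axis_def if_distrib[of "\<lambda>t. _ * t"] cong: if_cong)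
  ultimately show ?thesis by simp
qed

lemma continuous_on_det:
  fixes M :: "'a::topological_space \<Rightarrow> real^'n^'n"
  assumes "\<And>i j. continuous_on S (\<lambda>p. M p $ i $ j)"
  shows "continuous_on S (\<lambda>p. det (M p))"
  unfolding det_def by (intro continuous_on_sum continuous_on_mult continuous_on_const continuous_on_prod assms)

lemma continuous_on_matrix_inv_entry:
  fixes M :: "'a::topological_space \<Rightarrow> real^'n^'n"
  assumes "\<And>i j. continuous_on S (\<lambda>p. M p $ i $ j)" "\<And>p. p \<in> S \<Longrightarrow> det (M p) \<noteq> 0"
  shows "continuous_on S (\<lambda>p. matrix_inv (M p) $ i $ j)"
proof -
  have "continuous_on S (\<lambda>p. det (\<chi> r s. if s = i then axis j 1 $ r else M p $ r $ s))"
  proof (rule continuous_on_det)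
    show "continuous_on S (\<lambda>p. (\<chi> r s. if s = i then axis j 1 $ r else M p $ r $ s) $ r $ s)" for r s
      by (cases "s = i") (simp_all add: assms(1))
  qed
  then have "continuous_on S (\<lambda>p. det (\<chi> r s. if s = i then axis j 1 $ r else M p $ r $ s) / det (M p))"
    using continuous_on_det[OF assms(1)] assms(2) by (intro continuous_on_divide) auto
  then show ?thesis
    by (rule continuous_on_eq) (simp add: matrix_inv_cramer assms(2))
qed

lemma continuous_on_cost_coefficients:
  fixes c :: "(real^'n) \<times> (real^'n) \<Rightarrow> real"
  assumes "open U" "A \<times> B \<subseteq> U" "Ck 3 U c" and nondeg: "\<forall>x\<in>A. \<forall>y\<in>B. det (cmix c x y) \<noteq> 0"
  shows "continuous_on (A \<times> B) (\<lambda>p. cinv c (fst p) (snd p) l k)"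
    and "continuous_on (A \<times> B) (\<lambda>p. cXXY c i j l (fst p) (snd p))"
    and "continuous_on (A \<times> B) (\<lambda>p. cXYY c l i j (fst p) (snd p))"
proof -
  let ?S = "A \<times> B"
  have basis: "(axis i (1::real), 0::real^'n) \<in> Basis" "(0::real^'n, axis i (1::real)) \<in> Basis" for i
    by (simp_all add: Basis_prod_def)
  have C: "Ck (Suc (Suc (Suc 0))) U c" using assms(3) by (simp add: numeral_3_eq_3)
  note cont = continuous_on_subset[OF Ck_imp_continuous_on assms(2)]
  have c2: "continuous_on ?S (dderiv (dderiv c b\<^sub>1) b\<^sub>2)" if "b\<^sub>1 \<in> Basis" "b\<^sub>2 \<in> Basis" for b\<^sub>1 b\<^sub>2
    by (rule cont[OF Ck_Suc_dderiv[OF Ck_Suc_dderiv[OF C that(1)] that(2)]])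
  have c3: "continuous_on ?S (dderiv (dderiv (dderiv c b\<^sub>1) b\<^sub>2) b\<^sub>3)"
    if "b\<^sub>1 \<in> Basis" "b\<^sub>2 \<in> Basis" "b\<^sub>3 \<in> Basis" for b\<^sub>1 b\<^sub>2 b\<^sub>3
    by (rule cont[OF Ck_Suc_dderiv[OF Ck_Suc_dderiv[OF Ck_Suc_dderiv[OF C that(1)] that(2)] that(3)]])
  show "continuous_on ?S (\<lambda>p. cXXY c i j l (fst p) (snd p))"
    "continuous_on ?S (\<lambda>p. cXYY c l i j (fst p) (snd p))"
    unfolding cXXY_def cXYY_def cX_def cY_def
    using c3[OF basis(2) basis(1) basis(1)] c3[OF basis(2) basis(2) basis(1)] by simp_all
  have "continuous_on ?S (\<lambda>p. cmix c (fst p) (snd p) $ r $ s)" for r s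
    unfolding cmix_def cX_def cY_def using c2[OF basis(1) basis(2)] by simp
  then show "continuous_on ?S (\<lambda>p. cinv c (fst p) (snd p) l k)"
    unfolding cinv_def by (rule continuous_on_matrix_inv_entry) (use nondeg in auto)
qed

lemma sum_swap_mult_right:
  "(\<Sum>l\<in>UNIV. \<Sum>k\<in>UNIV. f l k * (v k :: real)) = (\<Sum>k\<in>UNIV. (\<Sum>l\<in>UNIV. f l k) * v k)"
  for f :: "'l::finite \<Rightarrow> 'k::finite \<Rightarrow> real"
  by (simp add: sum_distrib_right sum.swap[of _ "UNIV :: 'l set"])

lemma unif_c_convex_boundary_function:
  fixes \<Omega> \<Omega>s :: "(real^'n) set" and c :: "(real^'n) \<times> (real^'n) \<Rightarrow> real"
  assumes dom: "smooth_domain_normal \<Omega> \<nu>" and "bounded \<Omega>s"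
    and cinv_cont: "\<And>l k. continuous_on (closure \<Omega> \<times> closure \<Omega>s) (\<lambda>p. cinv c (fst p) (snd p) l k)"
    and cXXY_cont: "\<And>i j l. continuous_on (closure \<Omega> \<times> closure \<Omega>s) (\<lambda>p. cXXY c i j l (fst p) (snd p))"
    and "unif_c_convex c \<Omega> \<nu> \<Omega>s"
  shows "\<exists>h \<epsilon> \<delta>0. (\<exists>U. open U \<and> closure \<Omega> \<subseteq> U \<and> Ck 2 U h) \<and> \<epsilon> > 0 \<and> \<delta>0 > 0 \<and>
     (\<forall>x\<in>frontier \<Omega>. grad h x = \<nu> x) \<and> (\<forall>x\<in>strip \<Omega> \<epsilon>. h x < 0) \<and>
     (\<forall>x\<in>strip \<Omega> \<epsilon>. \<forall>y\<in>\<Omega>s. \<forall>\<xi>::real^'n.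
        (\<Sum>i\<in>UNIV. \<Sum>j\<in>UNIV. (D2 h i j x
            - (\<Sum>l\<in>UNIV. \<Sum>k\<in>UNIV. cinv c x y l k * cXXY c i j l x y * (grad h x $ k)))
          * \<xi> $ i * \<xi> $ j) \<ge> \<delta>0 * (norm \<xi>)\<^sup>2)"
proof -
  define a where "a i j k x y = (\<Sum>l\<in>UNIV. cinv c x y l k * cXXY c i j l x y)" for i j k x y
  have a: "(\<Sum>l\<in>UNIV. \<Sum>k\<in>UNIV. cinv c x y l k * cXXY c i j l x y * v $ k) = (\<Sum>k\<in>UNIV. a i j k x y * v $ k)"
    for i j x y and v :: "real^'n"
    unfolding a_def by (rule sum_swap_mult_right)
  obtain \<delta>\<^sub>1 where "\<delta>\<^sub>1 > 0" and "\<forall>z\<in>frontier \<Omega>. \<forall>y\<in>\<Omega>s. \<forall>\<tau>. norm \<tau> = 1 \<and> \<tau> \<bullet> \<nu> z = 0 \<longrightarrow>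
      \<delta>\<^sub>1 \<le> bilinear_form (\<lambda>i j. Dvec \<nu> i j z - (\<Sum>k\<in>UNIV. a i j k z y * \<nu> z $ k)) \<tau> \<tau>"
    using \<open>unif_c_convex c \<Omega> \<nu> \<Omega>s\<close> unfolding unif_c_convex_def bilinear_form_def a by blast
  then have convex: "\<And>z y \<tau>. z \<in> frontier \<Omega> \<Longrightarrow> y \<in> \<Omega>s \<Longrightarrow> norm \<tau> = 1 \<Longrightarrow> \<tau> \<bullet> \<nu> z = 0 \<Longrightarrow>
      \<delta>\<^sub>1 \<le> bilinear_form (\<lambda>i j. Dvec \<nu> i j z - (\<Sum>k\<in>UNIV. a i j k z y * \<nu> z $ k)) \<tau> \<tau>"
    by blast
  have "continuous_on (closure \<Omega> \<times> closure \<Omega>s) (\<lambda>p. a i j k (fst p) (snd p))" for i j k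
    unfolding a_def by (intro continuous_on_sum continuous_on_mult cinv_cont cXXY_cont)
  then obtain h U \<epsilon> \<delta>\<^sub>0 where "open U" "closure \<Omega> \<subseteq> U" "Ck 2 U h" "\<epsilon> > 0" "\<delta>\<^sub>0 > 0"
    and "\<And>z. z \<in> frontier \<Omega> \<Longrightarrow> grad h z = \<nu> z" "\<And>x. x \<in> strip \<Omega> \<epsilon> \<Longrightarrow> h x < 0"
    and "\<And>x y \<xi>. x \<in> strip \<Omega> \<epsilon> \<Longrightarrow> y \<in> \<Omega>s \<Longrightarrow>
       \<delta>\<^sub>0 * (norm \<xi>)\<^sup>2 \<le> bilinear_form (\<lambda>i j. D2 h i j x - (\<Sum>k\<in>UNIV. a i j k x y * grad h x $ k)) \<xi> \<xi>"
    by (rule convex_boundary_defining_function[OF dom \<open>bounded \<Omega>s\<close> _ \<open>\<delta>\<^sub>1 > 0\<close> convex])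
       (assumption | (rule that; assumption))+
  then show ?thesis
    unfolding a by (intro exI[of _ h] exI[of _ \<epsilon>] exI[of _ \<delta>\<^sub>0] conjI ballI allI exI[of _ U])
      (simp_all add: bilinear_form_def)
qed

lemma unif_cstar_convex_boundary_function:
  fixes \<Omega> \<Omega>s :: "(real^'n) set" and c :: "(real^'n) \<times> (real^'n) \<Rightarrow> real"
  assumes doms: "smooth_domain_normal \<Omega>s \<nu>s" and "bounded \<Omega>"
    and cinv_cont: "\<And>l k. continuous_on (closure \<Omega> \<times> closure \<Omega>s) (\<lambda>p. cinv c (fst p) (snd p) l k)"
    and cXYY_cont: "\<And>l i j. continuous_on (closure \<Omega> \<times> closure \<Omega>s) (\<lambda>p. cXYY c l i j (fst p) (snd p))"
    and "unif_cstar_convex c \<Omega>s \<nu>s \<Omega>"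
  shows "\<exists>hs \<epsilon>s \<delta>0s. (\<exists>U. open U \<and> closure \<Omega>s \<subseteq> U \<and> Ck 2 U hs) \<and> \<epsilon>s > 0 \<and> \<delta>0s > 0 \<and>
     (\<forall>y\<in>frontier \<Omega>s. grad hs y = \<nu>s y) \<and> (\<forall>y\<in>strip \<Omega>s \<epsilon>s. hs y < 0) \<and>
     (\<forall>y\<in>strip \<Omega>s \<epsilon>s. \<forall>x\<in>\<Omega>. \<forall>\<xi>::real^'n.
        (\<Sum>i\<in>UNIV. \<Sum>j\<in>UNIV. (D2 hs i j y
            - (\<Sum>k\<in>UNIV. \<Sum>l\<in>UNIV. cinv c x y k l * cXYY c l i j x y * (grad hs y $ k)))
          * \<xi> $ i * \<xi> $ j) \<ge> \<delta>0s * (norm \<xi>)\<^sup>2)"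
proof -
  define a where "a i j k y x = (\<Sum>l\<in>UNIV. cinv c x y k l * cXYY c l i j x y)" for i j k y x
  have a: "(\<Sum>k\<in>UNIV. \<Sum>l\<in>UNIV. cinv c x y k l * cXYY c l i j x y * v $ k) = (\<Sum>k\<in>UNIV. a i j k y x * v $ k)"
    for i j x y and v :: "real^'n"
    unfolding a_def by (simp add: sum_distrib_right)
  obtain \<delta>\<^sub>1 where "\<delta>\<^sub>1 > 0" and "\<forall>z\<in>frontier \<Omega>s. \<forall>x\<in>\<Omega>. \<forall>\<tau>. norm \<tau> = 1 \<and> \<tau> \<bullet> \<nu>s z = 0 \<longrightarrow>
      \<delta>\<^sub>1 \<le> bilinear_form (\<lambda>i j. Dvec \<nu>s i j z - (\<Sum>k\<in>UNIV. a i j k z x * \<nu>s z $ k)) \<tau> \<tau>"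
    using \<open>unif_cstar_convex c \<Omega>s \<nu>s \<Omega>\<close> unfolding unif_cstar_convex_def bilinear_form_def a by blast
  then have convex: "\<And>z x \<tau>. z \<in> frontier \<Omega>s \<Longrightarrow> x \<in> \<Omega> \<Longrightarrow> norm \<tau> = 1 \<Longrightarrow> \<tau> \<bullet> \<nu>s z = 0 \<Longrightarrow>
      \<delta>\<^sub>1 \<le> bilinear_form (\<lambda>i j. Dvec \<nu>s i j z - (\<Sum>k\<in>UNIV. a i j k z x * \<nu>s z $ k)) \<tau> \<tau>"
    by blast
  have swap: "continuous_on (closure \<Omega>s \<times> closure \<Omega>) (\<lambda>p. g (snd p) (fst p))"
    if "continuous_on (closure \<Omega> \<times> closure \<Omega>s) (\<lambda>p. g (fst p) (snd p))" for g :: "real^'n \<Rightarrow> real^'n \<Rightarrow> real"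
    using continuous_on_compose2[OF that continuous_on_swap, of "closure \<Omega>s \<times> closure \<Omega>"]
    by (simp add: product_swap)
  have "continuous_on (closure \<Omega>s \<times> closure \<Omega>) (\<lambda>p. a i j k (fst p) (snd p))" for i j k
    unfolding a_def by (intro continuous_on_sum continuous_on_mult swap cinv_cont cXYY_cont)
  then obtain h U \<epsilon> \<delta>\<^sub>0 where "open U" "closure \<Omega>s \<subseteq> U" "Ck 2 U h" "\<epsilon> > 0" "\<delta>\<^sub>0 > 0"
    and "\<And>z. z \<in> frontier \<Omega>s \<Longrightarrow> grad h z = \<nu>s z" "\<And>y. y \<in> strip \<Omega>s \<epsilon> \<Longrightarrow> h y < 0"
    and "\<And>y x \<xi>. y \<in> strip \<Omega>s \<epsilon> \<Longrightarrow> x \<in> \<Omega> \<Longrightarrow>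
       \<delta>\<^sub>0 * (norm \<xi>)\<^sup>2 \<le> bilinear_form (\<lambda>i j. D2 h i j y - (\<Sum>k\<in>UNIV. a i j k y x * grad h y $ k)) \<xi> \<xi>"
    by (rule convex_boundary_defining_function[OF doms \<open>bounded \<Omega>\<close> _ \<open>\<delta>\<^sub>1 > 0\<close> convex])
       (assumption | (rule that; assumption))+
  then show ?thesis
    unfolding a by (intro exI[of _ h] exI[of _ \<epsilon>] exI[of _ \<delta>\<^sub>0] conjI ballI allI exI[of _ U])
      (simp_all add: bilinear_form_def)
qed

theorem theoremA1:
  fixes \<Omega> \<Omega>s :: "(real^'n) set"
    and \<nu> \<nu>s :: "real^'n \<Rightarrow> real^'n"
    and c :: "(real^'n) \<times> (real^'n) \<Rightarrow> real"
  assumes dom: "smooth_domain_normal \<Omega> \<nu>"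
    and doms: "smooth_domain_normal \<Omega>s \<nu>s"
    and creg: "\<exists>\<alpha>. 0 < \<alpha> \<and> \<alpha> \<le> 1 \<and> Ck_alpha 4 \<alpha> (closure \<Omega> \<times> closure \<Omega>s) c"
    and twist1: "\<forall>x\<in>closure \<Omega>. inj_on (gradX c x) (closure \<Omega>s)"
    and twist2: "\<forall>y\<in>closure \<Omega>s. inj_on (\<lambda>x. gradY c x y) (closure \<Omega>)"
    and nondeg: "\<forall>x\<in>closure \<Omega>. \<forall>y\<in>closure \<Omega>s. det (cmix c x y) \<noteq> 0"
    and cconv: "unif_c_convex c \<Omega> \<nu> \<Omega>s"
    and csconv: "unif_cstar_convex c \<Omega>s \<nu>s \<Omega>"
  shows "\<exists>h hs \<epsilon> \<epsilon>s \<delta>0 \<delta>0s.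
     (\<exists>U. open U \<and> closure \<Omega> \<subseteq> U \<and> Ck 2 U h) \<and>
     (\<exists>U. open U \<and> closure \<Omega>s \<subseteq> U \<and> Ck 2 U hs) \<and>
     \<epsilon> > 0 \<and> \<epsilon>s > 0 \<and> \<delta>0 > 0 \<and> \<delta>0s > 0 \<and>
     (\<forall>x\<in>frontier \<Omega>. grad h x = \<nu> x) \<and>
     (\<forall>x\<in>strip \<Omega> \<epsilon>. h x < 0) \<and>
     (\<forall>x\<in>strip \<Omega> \<epsilon>. \<forall>y\<in>\<Omega>s. \<forall>\<xi>::real^'n.
        (\<Sum>i\<in>UNIV. \<Sum>j\<in>UNIV. (D2 h i j x
            - (\<Sum>l\<in>UNIV. \<Sum>k\<in>UNIV. cinv c x y l k * cXXY c i j l x y * (grad h x $ k)))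
          * \<xi> $ i * \<xi> $ j) \<ge> \<delta>0 * (norm \<xi>)\<^sup>2) \<and>
     (\<forall>y\<in>frontier \<Omega>s. grad hs y = \<nu>s y) \<and>
     (\<forall>y\<in>strip \<Omega>s \<epsilon>s. hs y < 0) \<and>
     (\<forall>y\<in>strip \<Omega>s \<epsilon>s. \<forall>x\<in>\<Omega>. \<forall>\<xi>::real^'n.
        (\<Sum>i\<in>UNIV. \<Sum>j\<in>UNIV. (D2 hs i j y
            - (\<Sum>k\<in>UNIV. \<Sum>l\<in>UNIV. cinv c x y k l * cXYY c l i j x y * (grad hs y $ k)))
          * \<xi> $ i * \<xi> $ j) \<ge> \<delta>0s * (norm \<xi>)\<^sup>2)"
proof -
  \<comment> \<open>Only the \<open>C\<^sup>3\<close> regularity and the nondegeneracy of \<open>c\<close> enter.\<close>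
  obtain U where "open U" and U_sub: "closure \<Omega> \<times> closure \<Omega>s \<subseteq> U" and "Ck (Suc 3) U c"
    using creg unfolding Ck_alpha_def by (auto simp: numeral_eq_Suc)
  have "Ck 3 U c" using \<open>Ck (Suc 3) U c\<close> by (rule Ck_Suc_imp_Ck)
  note coefficients = continuous_on_cost_coefficients[OF \<open>open U\<close> U_sub \<open>Ck 3 U c\<close> nondeg]
  have "bounded \<Omega>" "bounded \<Omega>s" using dom doms by (simp_all add: smooth_domain_normal_def)
  show ?thesis
    using unif_c_convex_boundary_function[OF dom \<open>bounded \<Omega>s\<close> coefficients(1,2) cconv]
      unif_cstar_convex_boundary_function[OF doms \<open>bounded \<Omega>\<close> coefficients(1,3) csconv]
    by (elim exE conjE) blast
qed

end
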